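(* Let $\gamma\in\{0\}\cup(0,\infty)\cup\{\infty\}$. There exists a maximizer $(q^*,{\rho^1}^*,{\rho^2}^* )$ of the dual problem $$\sup_{q\in S^n_\infty,\ \rho^1,\rho^2\in[0,\gamma]^n}\ \sum_{x\in V}\min_{i\in I}\Big(C_i(x)+(\mathrm{div}_wq_i)(x)+\rho_i^2-\rho_i^1\Big)+\sum_{i=1}^n(\rho_i^1S_i^\ell-\rho_i^2S_i^u).$$ For $x\in V$ let $I_m(x)=\arg\min_{i\in I}\big(C_i(x)+(\mathrm{div}_wq_i^* )(x)+{\rho_i^2}^*-{\rho_i^1}^*\big)$. Then there exists a solution $u^*$ of the relaxed primal problem (the convex relaxed problem with size information determined by $\gamma$ as in the context) such that $(u^*;q^*,{\rho^1}^*,{\rho^2}^* )$ is a primal-dual pair, and at each $x\in V$ any such $u^*$ satisfies $\sum_{i\in I_m(x)}u_i^*(x)=1$ and $u_j^*(x)=0$ for $j\notin I_m(x)$. If $I_m(x)$ is a single index $\{i_0\}$ at the point $x$, then $u^*_{i_0}(x)=1$ and $u^*_i(x)=0$ for $i\ne i_0$. If $I_m(x)$ is a singleton at every $x\in V$, then this $u^*$ (given by the indicator formula) is an exact global binary minimizer of the original non-convex problem $\min_{u\in\mathcal{B}}$ of the same energy (with the same size penalty or constraints).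
   Context: Let $G=(V,E)$ be a finite undirected graph with symmetric weights $w(x,y)=w(y,x)>0$ for $\{x,y\}\in E$ and $w(x,y)=0$ otherwise. $TV_w(v)=\frac12\sum_{x,y\in V}w(x,y)|v(y)-v(x)|$ for $v:V\to\mathbb{R}$. For $\phi:V\times V\to\mathbb{R}$, $(\mathrm{div}_w\phi)(x)=\frac12\sum_{y\in V}w(x,y)(\phi(x,y)-\phi(y,x))$, $\|\phi\|_\infty=\max_{x,y}|\phi(x,y)|$, and $S^n_\infty=\{(q_1,\dots,q_n):q_i:V\times V\to\mathbb{R},\|q_i\|_\infty\le1\}$. Let $n\ge2$, $I=\{1,\dots,n\}$, $C_i:V\to\mathbb{R}$ given; $\|u_i\|=\sum_xu_i(x)$; $\mathcal{B}=\{u:V\to\{0,1\}^n:\sum_iu_i(x)=1\ \forall x\}$, $\mathcal{B}'=\{u:V\to[0,1]^n:\sum_iu_i(x)=1\ \forall x\}$. Size bounds are integers $0\le S_i^\ell\le S_i^u$ with $\sum_iS_i^\ell\le|V|\le\sum_iS_i^u$; for $0<\gamma<\infty$, $P_\gamma(t)=0$ if $S_i^\ell\le t\le S_i^u$, $\gamma(t-S_i^u)$ if $t>S_i^u$, $\gamma(S_i^\ell-t)$ if $t<S_i^\ell$; $[0,\infty]$ means $[0,\infty)$. The relaxed primal problem is $\min_{u\in\mathcal{B}'}\sum_i\sum_xC_i(x)u_i(x)+\sum_iTV_w(u_i)$, with no size terms if $\gamma=0$, with $\sum_iP_\gamma(\|u_i\|)$ added if $0<\gamma<\infty$, and under constraints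 $S_i^\ell\le\|u_i\|\le S_i^u$ if $\gamma=\infty$; the original problem is the same with $\mathcal{B}'$ replaced by $\mathcal{B}$. A primal-dual pair means a saddle point, with $u$ ranging over $\mathcal{B}'$ and $(q,\rho^1,\rho^2)$ over $S^n_\infty\times[0,\gamma]^n\times[0,\gamma]^n$, of $E(u;q,\rho^1,\rho^2)=\sum_{i}\sum_{x}u_i(x)\big(C_i(x)+(\mathrm{div}_wq_i)(x)+\rho_i^2-\rho_i^1\big)+\sum_i(\rho_i^1S_i^\ell-\rho_i^2S_i^u)$. *)

theory Defs
  imports "HOL-Analysis.Analysis"
begin

(* Vertex set V = UNIV of a finite type 'v; labels I = {1..n}; functions u_i : V -> R
   are encoded as u :: nat => 'v => real (only i in {1..n} matter). *)

definition TVw :: "('v::finite \<Rightarrow> 'v \<Rightarrow> real) \<Rightarrow> ('v \<Rightarrow> real) \<Rightarrow> real" where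
  "TVw w v = (1/2) * (\<Sum>x\<in>UNIV. \<Sum>y\<in>UNIV. w x y * \<bar>v y - v x\<bar>)"

definition divw :: "('v::finite \<Rightarrow> 'v \<Rightarrow> real) \<Rightarrow> ('v \<Rightarrow> 'v \<Rightarrow> real) \<Rightarrow> 'v \<Rightarrow> real" where
  "divw w \<phi> x = (1/2) * (\<Sum>y\<in>UNIV. w x y * (\<phi> x y - \<phi> y x))"

definition usize :: "('v::finite \<Rightarrow> real) \<Rightarrow> real" where
  "usize v = (\<Sum>x\<in>UNIV. v x)"

definition inBrel :: "nat \<Rightarrow> (nat \<Rightarrow> 'v \<Rightarrow> real) \<Rightarrow> bool" where
  "inBrel n u \<longleftrightarrow> (\<forall>x. (\<forall>i\<in>{1..n}. 0 \<le> u i x \<and> u i x \<le> 1) \<and> (\<Sum>i\<in>{1..n}. u i x) = 1)"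

definition inBbin :: "nat \<Rightarrow> (nat \<Rightarrow> 'v \<Rightarrow> real) \<Rightarrow> bool" where
  "inBbin n u \<longleftrightarrow> (\<forall>x. (\<forall>i\<in>{1..n}. u i x \<in> {0, 1}) \<and> (\<Sum>i\<in>{1..n}. u i x) = 1)"

definition Pgam :: "real \<Rightarrow> nat \<Rightarrow> nat \<Rightarrow> real \<Rightarrow> real" where
  "Pgam g sl su t = (if t > real su then g * (t - real su)
                     else if t < real sl then g * (real sl - t) else 0)"

definition energy ::
  "nat \<Rightarrow> ('v::finite \<Rightarrow> 'v \<Rightarrow> real) \<Rightarrow> (nat \<Rightarrow> 'v \<Rightarrow> real) \<Rightarrow> (nat \<Rightarrow> nat) \<Rightarrow> (nat \<Rightarrow> nat)
   \<Rightarrow> ereal \<Rightarrow> (nat \<Rightarrow> 'v \<Rightarrow> real) \<Rightarrow> real" where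
  "energy n w C Sl Su \<gamma> u =
     (\<Sum>i\<in>{1..n}. \<Sum>x\<in>UNIV. C i x * u i x) + (\<Sum>i\<in>{1..n}. TVw w (u i))
     + (if \<gamma> = \<infinity> then 0 else (\<Sum>i\<in>{1..n}. Pgam (real_of_ereal \<gamma>) (Sl i) (Su i) (usize (u i))))"

definition size_ok :: "nat \<Rightarrow> (nat \<Rightarrow> nat) \<Rightarrow> (nat \<Rightarrow> nat) \<Rightarrow> ereal \<Rightarrow> (nat \<Rightarrow> 'v::finite \<Rightarrow> real) \<Rightarrow> bool" where
  "size_ok n Sl Su \<gamma> u \<longleftrightarrow>
     (\<gamma> = \<infinity> \<longrightarrow> (\<forall>i\<in>{1..n}. real (Sl i) \<le> usize (u i) \<and> usize (u i) \<le> real (Su i)))"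

definition relaxed_sol where
  "relaxed_sol n w C Sl Su \<gamma> u \<longleftrightarrow> inBrel n u \<and> size_ok n Sl Su \<gamma> u \<and>
     (\<forall>u'. inBrel n u' \<and> size_ok n Sl Su \<gamma> u' \<longrightarrow> energy n w C Sl Su \<gamma> u \<le> energy n w C Sl Su \<gamma> u')"

definition orig_sol where
  "orig_sol n w C Sl Su \<gamma> u \<longleftrightarrow> inBbin n u \<and> size_ok n Sl Su \<gamma> u \<and>
     (\<forall>u'. inBbin n u' \<and> size_ok n Sl Su \<gamma> u' \<longrightarrow> energy n w C Sl Su \<gamma> u \<le> energy n w C Sl Su \<gamma> u')"

(* dual feasibility: q in S^n_infty, rho1, rho2 in [0,gamma]^n ([0,infty] meaning [0,infty)) *)
definition dual_feas :: "nat \<Rightarrow> ereal \<Rightarrow> (nat \<Rightarrow> 'v \<Rightarrow> 'v \<Rightarrow> real) \<Rightarrow> (nat \<Rightarrow> real) \<Rightarrow> (nat \<Rightarrow> real) \<Rightarrow> bool" where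
  "dual_feas n \<gamma> q \<rho>1 \<rho>2 \<longleftrightarrow>
     (\<forall>i\<in>{1..n}. \<forall>x y. \<bar>q i x y\<bar> \<le> 1) \<and>
     (\<forall>i\<in>{1..n}. 0 \<le> \<rho>1 i \<and> ereal (\<rho>1 i) \<le> \<gamma> \<and> 0 \<le> \<rho>2 i \<and> ereal (\<rho>2 i) \<le> \<gamma>)"

definition coef where
  "coef w C q \<rho>1 \<rho>2 i x = C i x + divw w (q i) x + \<rho>2 i - \<rho>1 i"

definition Lagr where
  "Lagr n w C Sl Su u q \<rho>1 \<rho>2 =
     (\<Sum>i\<in>{1..n}. \<Sum>x\<in>UNIV. u i x * coef w C q \<rho>1 \<rho>2 i x)
     + (\<Sum>i\<in>{1..n}. \<rho>1 i * real (Sl i) - \<rho>2 i * real (Su i))"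

definition dual_obj where
  "dual_obj n w C Sl Su q \<rho>1 \<rho>2 =
     (\<Sum>x\<in>UNIV. Min ((\<lambda>i. coef w C q \<rho>1 \<rho>2 i x) ` {1..n}))
     + (\<Sum>i\<in>{1..n}. \<rho>1 i * real (Sl i) - \<rho>2 i * real (Su i))"

definition dual_max where
  "dual_max n w C Sl Su \<gamma> q \<rho>1 \<rho>2 \<longleftrightarrow> dual_feas n \<gamma> q \<rho>1 \<rho>2 \<and>
     (\<forall>q' r1 r2. dual_feas n \<gamma> q' r1 r2 \<longrightarrow>
        dual_obj n w C Sl Su q' r1 r2 \<le> dual_obj n w C Sl Su q \<rho>1 \<rho>2)"

definition pd_pair where
  "pd_pair n w C Sl Su \<gamma> u q \<rho>1 \<rho>2 \<longleftrightarrow> inBrel n u \<and> dual_feas n \<gamma> q \<rho>1 \<rho>2 \<and>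
     (\<forall>u'. inBrel n u' \<longrightarrow> Lagr n w C Sl Su u q \<rho>1 \<rho>2 \<le> Lagr n w C Sl Su u' q \<rho>1 \<rho>2) \<and>
     (\<forall>q' r1 r2. dual_feas n \<gamma> q' r1 r2 \<longrightarrow> Lagr n w C Sl Su u q' r1 r2 \<le> Lagr n w C Sl Su u q \<rho>1 \<rho>2)"

definition Imin where
  "Imin n w C q \<rho>1 \<rho>2 x =
     {i\<in>{1..n}. coef w C q \<rho>1 \<rho>2 i x = Min ((\<lambda>j. coef w C q \<rho>1 \<rho>2 j x) ` {1..n})}"

end

theory Submission
  imports Defs
begin

text \<open>
  For feasible \<open>u\<close> and dual feasible \<open>(q, \<rho>\<^sup>1, \<rho>\<^sup>2)\<close>, summation by parts on the graph gives
  \<open>dual_obj \<le> Lagr u \<le> energy u\<close>, and the second inequality is an equality at a dual vertex: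
  \<open>q\<close> the sign of the jumps of \<open>u\<close> and \<open>\<rho>\<^sup>1, \<rho>\<^sup>2 \<in> {0, \<gamma>}\<close> according to the violated size
  bounds. Conversely, if \<open>c\<close> is below the primal minimum then at every point of the compact
  convex set \<open>B'\<close> one of finitely many affine functions (the vertex Lagrangians minus \<open>c\<close>
  and, for \<open>\<gamma> = \<infinity>\<close>, the size constraints) is positive, so by a theorem of the alternative a
  single convex combination is positive on all of \<open>B'\<close>; this is a dual point of value
  above \<open>c\<close>. All these dual points lie in a fixed compact box (for \<open>\<gamma> = \<infinity>\<close> after clipping
  \<open>\<rho>\<^sup>2 - \<rho>\<^sup>1\<close> to a window determined by \<open>C\<close> and \<open>w\<close>) on which the dual objective is
  continuous, so the dual maximum is attained and equals the primal minimum. A primal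
  minimiser and a dual maximiser therefore form a saddle point, and minimising the Lagrangian
  over \<open>B'\<close> forces \<open>u(x)\<close> onto the labels of minimal coefficient \<open>I\<^sub>m(x)\<close>.
\<close>

lemma compact_PiE_UNIV:
  fixes S :: "'a \<Rightarrow> 'b::topological_space set"
  assumes "\<And>i. compact (S i)"
  shows "compact (Pi\<^sub>E UNIV S)"
proof -
  have "compactin (product_topology (\<lambda>i. euclidean) UNIV) (Pi\<^sub>E UNIV S)"
    using assms by (simp add: compactin_PiE)
  then show ?thesis by (simp add: euclidean_product_topology)
qed

lemma continuous_on_coordinate [continuous_intros]:
  "continuous_on S (\<lambda>u::'a \<Rightarrow> 'b::topological_space. u i)"
  by (rule continuous_on_subset[OF continuous_on_product_coordinates subset_UNIV])

lemma continuous_on_coordinate2 [continuous_intros]: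
  "continuous_on S (\<lambda>u::'a \<Rightarrow> 'c \<Rightarrow> 'b::topological_space. u i x)"
proof -
  have "continuous_on UNIV ((\<lambda>f. f x) \<circ> (\<lambda>u::'a \<Rightarrow> 'c \<Rightarrow> 'b. u i))"
    by (intro continuous_on_compose continuous_on_coordinate)
  then show ?thesis using continuous_on_subset by (auto simp: o_def)
qed

lemma continuous_on_coordinate3 [continuous_intros]:
  "continuous_on S (\<lambda>u::'a \<Rightarrow> 'c \<Rightarrow> 'd \<Rightarrow> 'b::topological_space. u i x y)"
proof -
  have "continuous_on UNIV ((\<lambda>f. f y) \<circ> (\<lambda>u::'a \<Rightarrow> 'c \<Rightarrow> 'd \<Rightarrow> 'b. u i x))"
    by (intro continuous_on_compose continuous_on_coordinate continuous_on_coordinate2)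
  then show ?thesis using continuous_on_subset by (auto simp: o_def)
qed

lemma continuous_on_Min_image:
  fixes f :: "'i \<Rightarrow> 'a::topological_space \<Rightarrow> 'b::linorder_topology"
  assumes "finite I" "I \<noteq> {}" "\<And>i. i \<in> I \<Longrightarrow> continuous_on S (f i)"
  shows "continuous_on S (\<lambda>x. Min ((\<lambda>i. f i x) ` I))"
  using assms
proof (induction I rule: finite_ne_induct)
  case (insert j I)
  then have "continuous_on S (\<lambda>x. min (f j x) (Min ((\<lambda>i. f i x) ` I)))"
    by (intro continuous_on_min) auto
  then show ?case using insert.hyps by simp
qed simp

lemma finite_functions_fixed_outside:
  assumes "finite I" "finite T"
  shows "finite {f :: 'a \<Rightarrow> 'b. (\<forall>i. i \<notin> I \<longrightarrow> f i = z) \<and> (\<forall>i\<in>I. f i \<in> T)}"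
proof (rule finite_subset)
  show "{f. (\<forall>i. i \<notin> I \<longrightarrow> f i = z) \<and> (\<forall>i\<in>I. f i \<in> T)}
     \<subseteq> (\<lambda>g i. if i \<in> I then g i else z) ` (Pi\<^sub>E I (\<lambda>_. T))"
  proof
    fix f assume f: "f \<in> {f. (\<forall>i. i \<notin> I \<longrightarrow> f i = z) \<and> (\<forall>i\<in>I. f i \<in> T)}"
    then have "f = (\<lambda>i. if i \<in> I then restrict f I i else z)" by (auto simp: fun_eq_iff)
    moreover have "restrict f I \<in> Pi\<^sub>E I (\<lambda>_. T)" using f by auto
    ultimately show "f \<in> (\<lambda>g i. if i \<in> I then g i else z) ` (Pi\<^sub>E I (\<lambda>_. T))" by blast
  qed
  show "finite ((\<lambda>g i. if i \<in> I then g i else z) ` (Pi\<^sub>E I (\<lambda>_. T)))"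
    using assms by (intro finite_imageI finite_PiE) auto
qed

lemma sum_Inl_Inr_bool:
  fixes g :: "'a + ('b \<times> bool) \<Rightarrow> 'c::comm_monoid_add"
  assumes "finite Q" "finite I"
  shows "(\<Sum>k\<in>Inl ` Q \<union> Inr ` (I \<times> UNIV). g k)
    = (\<Sum>q\<in>Q. g (Inl q)) + (\<Sum>i\<in>I. g (Inr (i, True)) + g (Inr (i, False)))"
proof -
  have "(\<Sum>k\<in>Inl ` Q \<union> Inr ` (I \<times> UNIV). g k) = (\<Sum>k\<in>Inl ` Q. g k) + (\<Sum>k\<in>Inr ` (I \<times> UNIV). g k)"
    using assms by (intro sum.union_disjoint) auto
  also have "(\<Sum>k\<in>Inr ` (I \<times> UNIV). g k) = (\<Sum>i\<in>I. \<Sum>b\<in>UNIV. g (Inr (i, b)))"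
    by (simp add: sum.reindex sum.cartesian_product)
  finally show ?thesis by (simp add: sum.reindex UNIV_bool add.commute)
qed

lemma convex_sum_real:
  fixes lam y :: "'a \<Rightarrow> real"
  assumes "finite K" "convex S" "(\<Sum>k\<in>K. lam k) = 1" "\<And>k. k \<in> K \<Longrightarrow> 0 \<le> lam k"
    "\<And>k. k \<in> K \<Longrightarrow> y k \<in> S"
  shows "(\<Sum>k\<in>K. lam k * y k) \<in> S"
  using convex_sum[OF assms] by simp

section \<open>A theorem of the alternative\<close>

lemma power2_max_0_add_le:
  fixes b s :: real
  shows "(max 0 (b + s))\<^sup>2 \<le> (max 0 b)\<^sup>2 + 2 * max 0 b * s + s\<^sup>2"
proof (cases "b \<ge> 0")
  case True
  then have "(max 0 (b + s))\<^sup>2 \<le> (b + s)\<^sup>2"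
    by (cases "b + s \<ge> 0") (auto simp: max_def)
  then show ?thesis using True by (simp add: power2_eq_square algebra_simps max_def)
next
  case False
  then show ?thesis
    by (cases "b + s \<ge> 0") (auto simp: max_def power2_eq_square intro!: mult_mono)
qed

text \<open>First-order optimality of a minimiser \<open>u\<^sub>0\<close> of \<open>\<Sum>\<^sub>k (f\<^sub>k\<^sup>+)\<^sup>2\<close>
  along the segments \<open>mix t u u\<^sub>0\<close>: otherwise a small step towards \<open>u\<close> would decrease it.\<close>

lemma sum_pos_part_minimiser_variation:
  fixes f :: "'k \<Rightarrow> 'u \<Rightarrow> real" and mix :: "real \<Rightarrow> 'u \<Rightarrow> 'u \<Rightarrow> 'u"
  assumes mix_in: "\<And>t u v. 0 \<le> t \<Longrightarrow> t \<le> 1 \<Longrightarrow> u \<in> U \<Longrightarrow> v \<in> U \<Longrightarrow> mix t u v \<in> U"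
    and affine: "\<And>k t u v. k \<in> K \<Longrightarrow> 0 \<le> t \<Longrightarrow> t \<le> 1 \<Longrightarrow> u \<in> U \<Longrightarrow> v \<in> U \<Longrightarrow>
        f k (mix t u v) = t * f k u + (1 - t) * f k v"
    and u0: "u0 \<in> U"
    and minimal: "\<And>v. v \<in> U \<Longrightarrow> (\<Sum>k\<in>K. (max 0 (f k u0))\<^sup>2) \<le> (\<Sum>k\<in>K. (max 0 (f k v))\<^sup>2)"
    and u: "u \<in> U"
  shows "0 \<le> (\<Sum>k\<in>K. max 0 (f k u0) * (f k u - f k u0))"
proof (rule ccontr)
  define a where "a k = max 0 (f k u0)" for k
  define S where "S = (\<Sum>k\<in>K. a k * (f k u - f k u0))"
  define Q where "Q = (\<Sum>k\<in>K. (f k u - f k u0)\<^sup>2)"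
  assume "\<not> ?thesis"
  then have S_neg: "S < 0" by (simp add: S_def a_def)
  have Q_nonneg: "Q \<ge> 0" unfolding Q_def by (intro sum_nonneg) auto
  define t where "t = min 1 (- S / (Q + 1))"
  have t: "0 < t" "t \<le> 1" using S_neg Q_nonneg by (auto simp: t_def divide_neg_pos)
  have "t * Q \<le> (- S / (Q + 1)) * Q"
    using Q_nonneg by (intro mult_right_mono) (auto simp: t_def)
  also have "\<dots> \<le> - S"
    using Q_nonneg S_neg by (simp add: field_simps)
  finally have tQ: "t * Q \<le> - S" .
  define v where "v = mix t u u0"
  have f_v: "f k v = f k u0 + t * (f k u - f k u0)" if "k \<in> K" for k
    unfolding v_def using affine[OF that _ t(2) u u0] t(1) by (simp add: algebra_simps)
  have "(\<Sum>k\<in>K. (max 0 (f k v))\<^sup>2)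
      \<le> (\<Sum>k\<in>K. (a k)\<^sup>2 + 2 * a k * (t * (f k u - f k u0)) + (t * (f k u - f k u0))\<^sup>2)"
    unfolding a_def by (intro sum_mono) (simp add: f_v power2_max_0_add_le)
  also have "\<dots> = (\<Sum>k\<in>K. (a k)\<^sup>2) + t * (2 * S + t * Q)"
  proof -
    have e1: "(\<Sum>k\<in>K. 2 * a k * (t * (f k u - f k u0))) = 2 * t * S"
      unfolding S_def sum_distrib_left by (rule sum.cong) (auto simp: algebra_simps)
    have e2: "(\<Sum>k\<in>K. (t * (f k u - f k u0))\<^sup>2) = t\<^sup>2 * Q"
      unfolding Q_def sum_distrib_left by (rule sum.cong) (auto simp: power_mult_distrib)
    show ?thesis unfolding sum.distrib e1 e2 by (simp add: power2_eq_square algebra_simps)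
  qed
  also have "\<dots> < (\<Sum>k\<in>K. (a k)\<^sup>2)"
    using tQ S_neg t(1) by (simp add: mult_pos_neg)
  finally show False
    using minimal[of v] mix_in[OF _ t(2) u u0] t(1) by (simp add: v_def a_def)
qed

text \<open>A Gordan-type alternative. The weights are the normalised positive parts of the
  \<open>f\<^sub>k\<close> at a minimiser of \<open>\<Sum>\<^sub>k (f\<^sub>k\<^sup>+)\<^sup>2\<close>.\<close>

lemma convex_combination_positive_everywhere:
  fixes U :: "'u::topological_space set" and f :: "'k \<Rightarrow> 'u \<Rightarrow> real"
    and mix :: "real \<Rightarrow> 'u \<Rightarrow> 'u \<Rightarrow> 'u"
  assumes "compact U" "U \<noteq> {}" "finite K"
    and cont: "\<And>k. k \<in> K \<Longrightarrow> continuous_on U (f k)"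
    and mix_in: "\<And>t u v. 0 \<le> t \<Longrightarrow> t \<le> 1 \<Longrightarrow> u \<in> U \<Longrightarrow> v \<in> U \<Longrightarrow> mix t u v \<in> U"
    and affine: "\<And>k t u v. k \<in> K \<Longrightarrow> 0 \<le> t \<Longrightarrow> t \<le> 1 \<Longrightarrow> u \<in> U \<Longrightarrow> v \<in> U \<Longrightarrow>
        f k (mix t u v) = t * f k u + (1 - t) * f k v"
    and some_pos: "\<And>u. u \<in> U \<Longrightarrow> \<exists>k\<in>K. f k u > 0"
  shows "\<exists>lam. (\<forall>k\<in>K. 0 \<le> lam k) \<and> (\<Sum>k\<in>K. lam k) = 1 \<and> (\<forall>u\<in>U. (\<Sum>k\<in>K. lam k * f k u) > 0)"
proof -
  have "continuous_on U (\<lambda>u. \<Sum>k\<in>K. (max 0 (f k u))\<^sup>2)"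
    by (intro continuous_intros cont)
  then obtain u0 where u0: "u0 \<in> U"
    and minimal: "\<And>v. v \<in> U \<Longrightarrow> (\<Sum>k\<in>K. (max 0 (f k u0))\<^sup>2) \<le> (\<Sum>k\<in>K. (max 0 (f k v))\<^sup>2)"
    using continuous_attains_inf[OF assms(1,2)] by blast
  define a where "a k = max 0 (f k u0)" for k
  obtain k0 where k0: "k0 \<in> K" "f k0 u0 > 0" using some_pos[OF u0] by blast
  have a_pos: "a k0 > 0" using k0 by (simp add: a_def)
  have "(a k0)\<^sup>2 \<le> (\<Sum>k\<in>K. (a k)\<^sup>2)"
    using k0 assms(3) by (intro member_le_sum) auto
  moreover have "(\<Sum>k\<in>K. a k * f k u0) = (\<Sum>k\<in>K. (a k)\<^sup>2)"
    by (intro sum.cong) (auto simp: a_def max_def power2_eq_square)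
  ultimately have at_u0: "(\<Sum>k\<in>K. a k * f k u0) > 0"
    using a_pos by (smt (verit) zero_less_power)
  define s where "s = (\<Sum>k\<in>K. a k)"
  have s_pos: "s > 0"
    using a_pos member_le_sum[OF k0(1), of a] assms(3) by (simp add: s_def a_def)
  show ?thesis
  proof (intro exI[of _ "\<lambda>k. a k / s"] conjI ballI)
    show "0 \<le> a k / s" for k using s_pos by (simp add: a_def)
    show "(\<Sum>k\<in>K. a k / s) = 1" using s_pos by (simp add: s_def sum_divide_distrib[symmetric])
    fix u assume u: "u \<in> U"
    have "(\<Sum>k\<in>K. a k * f k u) = (\<Sum>k\<in>K. a k * f k u0) + (\<Sum>k\<in>K. a k * (f k u - f k u0))"
      by (simp add: sum.distrib[symmetric] algebra_simps)
    moreover have "0 \<le> (\<Sum>k\<in>K. a k * (f k u - f k u0))"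
      unfolding a_def by (rule sum_pos_part_minimiser_variation[OF mix_in affine u0 minimal u])
    ultimately have "(\<Sum>k\<in>K. a k * f k u) / s > 0" using at_u0 s_pos by simp
    then show "(\<Sum>k\<in>K. a k / s * f k u) > 0" by (simp add: sum_divide_distrib)
  qed
qed

section \<open>Divergence, total variation and the Lagrangian\<close>

lemma sum_mult_divw:
  fixes w :: "'v::finite \<Rightarrow> 'v \<Rightarrow> real"
  assumes w_sym: "\<And>x y. w x y = w y x"
  shows "(\<Sum>x\<in>UNIV. v x * divw w \<phi> x) = (1/2) * (\<Sum>x\<in>UNIV. \<Sum>y\<in>UNIV. w x y * \<phi> x y * (v x - v y))"
proof -
  have "(\<Sum>x\<in>UNIV. v x * divw w \<phi> x) = (1/2) * ((\<Sum>x\<in>UNIV. \<Sum>y\<in>UNIV. w x y * \<phi> x y * v x)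
      - (\<Sum>x\<in>UNIV. \<Sum>y\<in>UNIV. w x y * \<phi> y x * v x))"
    unfolding divw_def by (simp add: sum_distrib_left sum_subtractf[symmetric] algebra_simps)
  also have "(\<Sum>x\<in>UNIV. \<Sum>y\<in>UNIV. w x y * \<phi> y x * v x) = (\<Sum>x\<in>UNIV. \<Sum>y\<in>UNIV. w x y * \<phi> x y * v y)"
    by (subst sum.swap) (simp add: w_sym)
  finally show ?thesis
    by (simp add: sum_subtractf[symmetric] algebra_simps)
qed

lemma sum_mult_divw_le_TVw:
  fixes w :: "'v::finite \<Rightarrow> 'v \<Rightarrow> real"
  assumes "\<And>x y. w x y = w y x" and w_nonneg: "\<And>x y. w x y \<ge> 0"
    and \<phi>_bound: "\<And>x y. \<bar>\<phi> x y\<bar> \<le> 1"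
  shows "(\<Sum>x\<in>UNIV. v x * divw w \<phi> x) \<le> TVw w v"
proof -
  have "w x y * \<phi> x y * (v x - v y) \<le> w x y * \<bar>v y - v x\<bar>" for x y
  proof -
    have "\<phi> x y * (v x - v y) \<le> \<bar>\<phi> x y\<bar> * \<bar>v y - v x\<bar>"
      by (metis abs_ge_self abs_minus_commute abs_mult)
    also have "\<dots> \<le> \<bar>v y - v x\<bar>" using \<phi>_bound[of x y] by (simp add: mult_left_le_one_le)
    finally show ?thesis using w_nonneg[of x y] by (simp add: mult.assoc mult_left_mono)
  qed
  then show ?thesis unfolding sum_mult_divw[OF assms(1)] TVw_def
    by (intro mult_left_mono sum_mono) auto
qed

definition sign_flow :: "('v \<Rightarrow> real) \<Rightarrow> 'v \<Rightarrow> 'v \<Rightarrow> real" where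
  "sign_flow v x y = (if v y \<le> v x then 1 else -1)"

definition sign_flows :: "('v \<Rightarrow> 'v \<Rightarrow> real) set" where
  "sign_flows = {\<phi>. \<forall>x y. \<phi> x y \<in> {-1, 1}}"

lemma finite_sign_flows: "finite (sign_flows :: ('v::finite \<Rightarrow> 'v \<Rightarrow> real) set)"
proof (rule finite_subset)
  show "sign_flows \<subseteq> Pi\<^sub>E UNIV (\<lambda>x::'v. Pi\<^sub>E UNIV (\<lambda>y::'v. {-1, 1::real}))"
    by (auto simp: sign_flows_def)
qed (simp add: finite_PiE)

lemma sum_mult_divw_sign_flow:
  fixes w :: "'v::finite \<Rightarrow> 'v \<Rightarrow> real"
  assumes "\<And>x y. w x y = w y x"
  shows "(\<Sum>x\<in>UNIV. v x * divw w (sign_flow v) x) = TVw w v"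
  unfolding sum_mult_divw[OF assms] TVw_def
  by (intro arg_cong[where f="\<lambda>t. (1/2) * t"] sum.cong refl) (auto simp: sign_flow_def)

lemma divw_convex_comb:
  "divw w (\<lambda>x y. \<Sum>k\<in>K. lam k * Q k x y) x = (\<Sum>k\<in>K. lam k * divw w (Q k) x)"
proof -
  have "divw w (\<lambda>x y. \<Sum>k\<in>K. lam k * Q k x y) x
      = (1/2) * (\<Sum>y\<in>UNIV. \<Sum>k\<in>K. lam k * (w x y * (Q k x y - Q k y x)))"
    unfolding divw_def by (simp add: sum_distrib_left sum_subtractf[symmetric] algebra_simps)
  also have "\<dots> = (\<Sum>k\<in>K. lam k * divw w (Q k) x)"
    unfolding divw_def by (subst sum.swap) (simp add: sum_distrib_left algebra_simps)
  finally show ?thesis .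
qed

lemma continuous_on_TVw [continuous_intros]:
  "continuous_on S (\<lambda>u::'i \<Rightarrow> 'v::finite \<Rightarrow> real. TVw w (u i))"
  unfolding TVw_def by (intro continuous_intros)

lemma continuous_on_usize [continuous_intros]:
  "continuous_on S (\<lambda>u::'i \<Rightarrow> 'v::finite \<Rightarrow> real. usize (u i))"
  unfolding usize_def by (intro continuous_intros)

lemma Pgam_0 [simp]: "Pgam 0 sl su t = 0"
  by (simp add: Pgam_def)

lemma Pgam_eq_pos_parts:
  "sl \<le> su \<Longrightarrow> Pgam g sl su t = g * max 0 (t - real su) + g * max 0 (real sl - t)"
  by (auto simp: Pgam_def max_def)

lemma multiplier_terms_le_Pgam:
  assumes "0 \<le> r1" "r1 \<le> g" "0 \<le> r2" "r2 \<le> g" "sl \<le> su"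
  shows "r2 * (s - real su) + r1 * (real sl - s) \<le> Pgam g sl su s"
proof -
  have "r2 * (s - real su) \<le> g * max 0 (s - real su)"
    using assms by (intro order_trans[OF mult_left_mono mult_right_mono]) auto
  moreover have "r1 * (real sl - s) \<le> g * max 0 (real sl - s)"
    using assms by (intro order_trans[OF mult_left_mono mult_right_mono]) auto
  ultimately show ?thesis using assms(5) by (simp add: Pgam_eq_pos_parts)
qed

lemma vertex_multiplier_terms_eq_Pgam:
  assumes "sl \<le> su"
  shows "(if s > real su then g else 0) * (s - real su) + (if s < real sl then g else 0) * (real sl - s)
     = Pgam g sl su s"
  using assms by (auto simp: Pgam_def)

lemma multiplier_terms_le_pos_parts:
  fixes r1 r2 sl su :: real
  assumes "0 \<le> r1" "0 \<le> r2" "sl \<le> su"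
  shows "r1 * sl - r2 * su \<le> max 0 (r1 - r2) * sl - max 0 (r2 - r1) * su"
proof (cases "r1 \<le> r2")
  case True
  have "r1 * sl \<le> r1 * su" using assms by (intro mult_left_mono) auto
  then show ?thesis using True by (simp add: max_def algebra_simps)
next
  case False
  have "r2 * sl \<le> r2 * su" using assms by (intro mult_left_mono) auto
  then show ?thesis using False by (simp add: max_def algebra_simps)
qed

lemma pos_parts_terms_antimono:
  fixes t t' sl su :: real
  assumes "t' \<le> t" "0 \<le> sl" "0 \<le> su"
  shows "max 0 (- t) * sl - max 0 t * su \<le> max 0 (- t') * sl - max 0 t' * su"
proof -
  have "max 0 (- t) * sl \<le> max 0 (- t') * sl" using assms by (intro mult_right_mono) auto
  moreover have "max 0 t' * su \<le> max 0 t * su" using assms by (intro mult_right_mono) auto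
  ultimately show ?thesis by linarith
qed

lemma Lagr_eq_data_flow_size_terms:
  "Lagr n w C Sl Su u q r1 r2 = (\<Sum>i\<in>{1..n}. \<Sum>x\<in>UNIV. C i x * u i x)
     + (\<Sum>i\<in>{1..n}. \<Sum>x\<in>UNIV. u i x * divw w (q i) x)
     + (\<Sum>i\<in>{1..n}. r2 i * (usize (u i) - real (Su i)) + r1 i * (real (Sl i) - usize (u i)))"
proof -
  have e: "(\<Sum>x\<in>UNIV. u i x * coef w C q r1 r2 i x) = (\<Sum>x\<in>UNIV. C i x * u i x)
     + (\<Sum>x\<in>UNIV. u i x * divw w (q i) x) + r2 i * usize (u i) - r1 i * usize (u i)" for i
    unfolding coef_def usize_def
    by (simp add: algebra_simps sum.distrib sum_distrib_left sum_subtractf)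
  show ?thesis unfolding Lagr_def e
    by (simp add: sum.distrib[symmetric] sum_subtractf[symmetric] algebra_simps)
qed

lemma inBbin_imp_inBrel: "inBbin n u \<Longrightarrow> inBrel n u"
  unfolding inBbin_def inBrel_def by (metis empty_iff insert_iff order.refl zero_le_one)

type_synonym 'v dual_point = "(nat \<Rightarrow> 'v \<Rightarrow> 'v \<Rightarrow> real) \<times> (nat \<Rightarrow> real) \<times> (nat \<Rightarrow> real)"

locale labeling_problem =
  fixes n :: nat and w :: "'v::finite \<Rightarrow> 'v \<Rightarrow> real" and C :: "nat \<Rightarrow> 'v \<Rightarrow> real"
    and Sl Su :: "nat \<Rightarrow> nat" and \<gamma> :: ereal
  assumes w_nonneg: "\<And>x y. w x y \<ge> 0" and w_sym: "\<And>x y. w x y = w y x" and n_pos: "n \<ge> 1"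
    and Sl_le_Su: "\<And>i. i \<in> {1..n} \<Longrightarrow> Sl i \<le> Su i"
    and sum_Sl_le_card: "(\<Sum>i\<in>{1..n}. Sl i) \<le> CARD('v)"
    and card_le_sum_Su: "CARD('v) \<le> (\<Sum>i\<in>{1..n}. Su i)"
    and gamma_nonneg: "\<gamma> \<ge> 0"
begin

abbreviation "En u \<equiv> energy n w C Sl Su \<gamma> u"
abbreviation "L u q r1 r2 \<equiv> Lagr n w C Sl Su u q r1 r2"
abbreviation "D q r1 r2 \<equiv> dual_obj n w C Sl Su q r1 r2"
abbreviation "min_coef q r1 r2 x \<equiv> Min ((\<lambda>j. coef w C q r1 r2 j x) ` {1..n})"

section \<open>Weak duality\<close>

text \<open>The multiplier used at the dual vertices; for \<open>\<gamma> = \<infinity>\<close> the sizes are hard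
  constraints and the vertices carry no multipliers.\<close>

definition gamma_fin :: real where
  "gamma_fin = (if \<gamma> = \<infinity> then 0 else real_of_ereal \<gamma>)"

lemma gamma_fin_nonneg: "gamma_fin \<ge> 0"
  unfolding gamma_fin_def using gamma_nonneg by (cases \<gamma>) auto

lemma gamma_fin_le_gamma: "ereal gamma_fin \<le> \<gamma>"
  unfolding gamma_fin_def using gamma_nonneg by (cases \<gamma>) auto

lemma Lagr_le_energy:
  assumes size: "size_ok n Sl Su \<gamma> u" and feas: "dual_feas n \<gamma> q r1 r2"
  shows "L u q r1 r2 \<le> En u"
proof -
  have flow: "(\<Sum>i\<in>{1..n}. \<Sum>x\<in>UNIV. u i x * divw w (q i) x) \<le> (\<Sum>i\<in>{1..n}. TVw w (u i))"
    using feas by (intro sum_mono sum_mult_divw_le_TVw w_sym w_nonneg) (auto simp: dual_feas_def)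
  have "(\<Sum>i\<in>{1..n}. r2 i * (usize (u i) - real (Su i)) + r1 i * (real (Sl i) - usize (u i)))
      \<le> (if \<gamma> = \<infinity> then 0 else (\<Sum>i\<in>{1..n}. Pgam (real_of_ereal \<gamma>) (Sl i) (Su i) (usize (u i))))"
  proof (cases "\<gamma> = \<infinity>")
    case True
    then show ?thesis using size feas
      by (auto simp: size_ok_def dual_feas_def add_nonpos_nonpos mult_nonneg_nonpos intro!: sum_nonpos)
  next
    case False
    then have "r \<le> real_of_ereal \<gamma>" if "ereal r \<le> \<gamma>" for r
      using that gamma_nonneg by (cases \<gamma>) auto
    then show ?thesis using False feas Sl_le_Su
      by (auto simp: dual_feas_def intro!: sum_mono multiplier_terms_le_Pgam)
  qed
  with flow show ?thesis
    unfolding Lagr_eq_data_flow_size_terms energy_def by (simp add: mult.commute)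
qed

definition vertex_flow :: "(nat \<Rightarrow> 'v \<Rightarrow> real) \<Rightarrow> nat \<Rightarrow> 'v \<Rightarrow> 'v \<Rightarrow> real" where
  "vertex_flow u i = (if i \<in> {1..n} then sign_flow (u i) else (\<lambda>x y. 0))"

definition vertex_r1 :: "(nat \<Rightarrow> 'v \<Rightarrow> real) \<Rightarrow> nat \<Rightarrow> real" where
  "vertex_r1 u i = (if i \<in> {1..n} \<and> usize (u i) < real (Sl i) then gamma_fin else 0)"

definition vertex_r2 :: "(nat \<Rightarrow> 'v \<Rightarrow> real) \<Rightarrow> nat \<Rightarrow> real" where
  "vertex_r2 u i = (if i \<in> {1..n} \<and> usize (u i) > real (Su i) then gamma_fin else 0)"

lemma Lagr_vertex: "L u (vertex_flow u) (vertex_r1 u) (vertex_r2 u) = En u"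
proof -
  have "(\<Sum>i\<in>{1..n}. \<Sum>x\<in>UNIV. u i x * divw w (vertex_flow u i) x) = (\<Sum>i\<in>{1..n}. TVw w (u i))"
    by (intro sum.cong refl) (auto simp: vertex_flow_def sum_mult_divw_sign_flow[OF w_sym])
  moreover have "(\<Sum>i\<in>{1..n}. vertex_r2 u i * (usize (u i) - real (Su i))
        + vertex_r1 u i * (real (Sl i) - usize (u i)))
      = (if \<gamma> = \<infinity> then 0 else (\<Sum>i\<in>{1..n}. Pgam (real_of_ereal \<gamma>) (Sl i) (Su i) (usize (u i))))"
    unfolding vertex_r1_def vertex_r2_def gamma_fin_def
    by (cases "\<gamma> = \<infinity>") (auto simp: vertex_multiplier_terms_eq_Pgam[OF Sl_le_Su] intro!: sum.cong)
  ultimately show ?thesis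
    unfolding Lagr_eq_data_flow_size_terms energy_def by (simp add: mult.commute)
qed

lemma min_coef_le: "i \<in> {1..n} \<Longrightarrow> min_coef q r1 r2 x \<le> coef w C q r1 r2 i x"
  by (intro Min_le) auto

lemma Imin_nonempty: "\<exists>i. i \<in> Imin n w C q r1 r2 x"
proof -
  have "min_coef q r1 r2 x \<in> (\<lambda>j. coef w C q r1 r2 j x) ` {1..n}"
    using n_pos by (intro Min_in) auto
  then show ?thesis unfolding Imin_def by auto
qed

definition argmin_label :: "(nat \<Rightarrow> 'v \<Rightarrow> 'v \<Rightarrow> real) \<Rightarrow> (nat \<Rightarrow> real) \<Rightarrow> (nat \<Rightarrow> real) \<Rightarrow> 'v \<Rightarrow> nat" where
  "argmin_label q r1 r2 x = (SOME i. i \<in> Imin n w C q r1 r2 x)"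

lemma argmin_label: "argmin_label q r1 r2 x \<in> {1..n}"
  "coef w C q r1 r2 (argmin_label q r1 r2 x) x = min_coef q r1 r2 x"
  using someI_ex[OF Imin_nonempty] by (auto simp: argmin_label_def Imin_def)

definition argmin_assignment :: "(nat \<Rightarrow> 'v \<Rightarrow> 'v \<Rightarrow> real) \<Rightarrow> (nat \<Rightarrow> real) \<Rightarrow> (nat \<Rightarrow> real) \<Rightarrow> nat \<Rightarrow> 'v \<Rightarrow> real" where
  "argmin_assignment q r1 r2 i x = (if i = argmin_label q r1 r2 x then 1 else 0)"

lemma inBrel_argmin_assignment: "inBrel n (argmin_assignment q r1 r2)"
  using argmin_label(1) by (auto simp: inBrel_def argmin_assignment_def)

lemma Lagr_argmin_assignment: "L (argmin_assignment q r1 r2) q r1 r2 = D q r1 r2"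
proof -
  have "(\<Sum>i\<in>{1..n}. argmin_assignment q r1 r2 i x * coef w C q r1 r2 i x) = min_coef q r1 r2 x" for x
    using argmin_label[of q r1 r2 x]
    by (simp add: argmin_assignment_def if_distrib[of "\<lambda>t. t * _"] cong: if_cong)
  then show ?thesis unfolding Lagr_def dual_obj_def by (subst sum.swap) simp
qed

lemma Lagr_minus_dual_obj:
  assumes "inBrel n u"
  shows "L u q r1 r2 - D q r1 r2
    = (\<Sum>x\<in>UNIV. \<Sum>i\<in>{1..n}. u i x * (coef w C q r1 r2 i x - min_coef q r1 r2 x))"
proof -
  have "L u q r1 r2 - D q r1 r2
      = (\<Sum>x\<in>UNIV. (\<Sum>i\<in>{1..n}. u i x * coef w C q r1 r2 i x) - min_coef q r1 r2 x)"
    unfolding Lagr_def dual_obj_def by (subst sum.swap) (simp add: sum_subtractf)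
  also have "\<dots> = (\<Sum>x\<in>UNIV. \<Sum>i\<in>{1..n}. u i x * (coef w C q r1 r2 i x - min_coef q r1 r2 x))"
    using assms by (simp add: inBrel_def right_diff_distrib sum_subtractf sum_distrib_right[symmetric])
  finally show ?thesis .
qed

lemma excess_nonneg:
  "inBrel n u \<Longrightarrow> i \<in> {1..n} \<Longrightarrow> 0 \<le> u i x * (coef w C q r1 r2 i x - min_coef q r1 r2 x)"
  using min_coef_le[of i q r1 r2 x] by (simp add: inBrel_def)

lemma dual_obj_le_Lagr:
  assumes "inBrel n u"
  shows "D q r1 r2 \<le> L u q r1 r2"
proof -
  have "0 \<le> (\<Sum>x\<in>UNIV. \<Sum>i\<in>{1..n}. u i x * (coef w C q r1 r2 i x - min_coef q r1 r2 x))"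
    using excess_nonneg[OF assms] by (intro sum_nonneg) auto
  then show ?thesis using Lagr_minus_dual_obj[OF assms, of q r1 r2] by linarith
qed

text \<open>Complementary slackness: a minimiser of the Lagrangian over \<open>B'\<close> attains the
  dual objective, so all excess terms in \<open>Lagr_minus_dual_obj\<close> vanish.\<close>

lemma Lagr_minimiser_supported_on_Imin:
  assumes u: "inBrel n u" and minimal: "\<forall>u'. inBrel n u' \<longrightarrow> L u q r1 r2 \<le> L u' q r1 r2"
  shows "(\<Sum>i\<in>Imin n w C q r1 r2 x. u i x) = 1 \<and>
         (\<forall>j\<in>{1..n}. j \<notin> Imin n w C q r1 r2 x \<longrightarrow> u j x = 0)"
proof -
  have "L u q r1 r2 \<le> D q r1 r2"
    using minimal inBrel_argmin_assignment Lagr_argmin_assignment by metis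
  then have "(\<Sum>x\<in>UNIV. \<Sum>i\<in>{1..n}. u i x * (coef w C q r1 r2 i x - min_coef q r1 r2 x)) = 0"
    using Lagr_minus_dual_obj[OF u, of q r1 r2] dual_obj_le_Lagr[OF u, of q r1 r2] by linarith
  moreover have "0 \<le> (\<Sum>i\<in>{1..n}. u i x * (coef w C q r1 r2 i x - min_coef q r1 r2 x))" for x
    using excess_nonneg[OF u] by (auto intro: sum_nonneg)
  ultimately have "(\<Sum>i\<in>{1..n}. u i x * (coef w C q r1 r2 i x - min_coef q r1 r2 x)) = 0"
    by (simp add: sum_nonneg_eq_0_iff)
  then have "\<forall>i\<in>{1..n}. u i x * (coef w C q r1 r2 i x - min_coef q r1 r2 x) = 0"
    using excess_nonneg[OF u] by (subst (asm) sum_nonneg_eq_0_iff) auto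
  then have off: "\<forall>j\<in>{1..n}. j \<notin> Imin n w C q r1 r2 x \<longrightarrow> u j x = 0"
    by (auto simp: Imin_def)
  have "(\<Sum>i\<in>{1..n}. u i x) = (\<Sum>i\<in>Imin n w C q r1 r2 x. u i x)"
    using off by (intro sum.mono_neutral_right) (auto simp: Imin_def)
  then show ?thesis using u off by (simp add: inBrel_def)
qed

section \<open>Existence of a relaxed minimiser\<close>

text \<open>\<open>B'\<close> normalised to vanish outside the labels \<open>1..n\<close>, which makes it compact.\<close>

definition label_range :: "nat \<Rightarrow> real set" where
  "label_range i = (if i \<in> {1..n} then {0..1} else {0})"

definition relaxed_set :: "(nat \<Rightarrow> 'v \<Rightarrow> real) set" where
  "relaxed_set = {u. (\<forall>i x. u i x \<in> label_range i) \<and> (\<forall>x. (\<Sum>i\<in>{1..n}. u i x) = 1)}"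

definition feasible_set :: "(nat \<Rightarrow> 'v \<Rightarrow> real) set" where
  "feasible_set = relaxed_set \<inter> {u. size_ok n Sl Su \<gamma> u}"

definition restrict_labels :: "(nat \<Rightarrow> 'v \<Rightarrow> real) \<Rightarrow> nat \<Rightarrow> 'v \<Rightarrow> real" where
  "restrict_labels u i = (if i \<in> {1..n} then u i else (\<lambda>_. 0))"

definition mix :: "real \<Rightarrow> (nat \<Rightarrow> 'v \<Rightarrow> real) \<Rightarrow> (nat \<Rightarrow> 'v \<Rightarrow> real) \<Rightarrow> nat \<Rightarrow> 'v \<Rightarrow> real" where
  "mix t u v i x = t * u i x + (1 - t) * v i x"

lemma relaxed_set_inBrel:
  assumes "u \<in> relaxed_set"
  shows "inBrel n u"
proof -
  have range: "u i x \<in> label_range i" for i x using assms by (simp add: relaxed_set_def)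
  have "u i x \<in> {0..1}" if "i \<in> {1..n}" for i x
    using range[of i x] that by (simp add: label_range_def)
  then show ?thesis using assms by (simp add: inBrel_def relaxed_set_def)
qed

lemma argmin_assignment_in_relaxed_set: "argmin_assignment q r1 r2 \<in> relaxed_set"
  using argmin_label(1) inBrel_argmin_assignment[of q r1 r2]
  by (auto simp: relaxed_set_def label_range_def argmin_assignment_def inBrel_def)


lemma restrict_labels_in_relaxed_set: "inBrel n u \<Longrightarrow> restrict_labels u \<in> relaxed_set"
  by (auto simp: relaxed_set_def inBrel_def restrict_labels_def label_range_def)

lemma energy_restrict_labels: "En (restrict_labels u) = En u"
  unfolding energy_def restrict_labels_def
  by (intro arg_cong2[where f="(+)"] sum.cong refl if_cong) auto

lemma size_ok_restrict_labels: "size_ok n Sl Su \<gamma> (restrict_labels u) = size_ok n Sl Su \<gamma> u"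
  unfolding size_ok_def restrict_labels_def by auto

lemma compact_relaxed_set: "compact relaxed_set"
proof -
  have "relaxed_set = (Pi\<^sub>E UNIV (\<lambda>i. Pi\<^sub>E UNIV (\<lambda>x. label_range i)))
      \<inter> (\<Inter>x. {u. (\<Sum>i\<in>{1..n}. u i x) = 1})"
    by (auto simp: relaxed_set_def PiE_iff)
  moreover have "compact (Pi\<^sub>E UNIV (\<lambda>i. Pi\<^sub>E (UNIV :: 'v set) (\<lambda>x. label_range i)))"
    by (intro compact_PiE_UNIV) (auto simp: label_range_def)
  moreover have "closed (\<Inter>x::'v. {u::nat \<Rightarrow> 'v \<Rightarrow> real. (\<Sum>i\<in>{1..n}. u i x) = 1})"
    by (intro closed_INT ballI closed_Collect_eq continuous_intros)
  ultimately show ?thesis by (simp add: compact_Int_closed)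
qed

lemma compact_feasible_set: "compact feasible_set"
proof -
  have "closed {u::nat \<Rightarrow> 'v \<Rightarrow> real. size_ok n Sl Su \<gamma> u}"
  proof (cases "\<gamma> = \<infinity>")
    case True
    then have "{u. size_ok n Sl Su \<gamma> u} = (\<Inter>i\<in>{1..n}.
        {u::nat \<Rightarrow> 'v \<Rightarrow> real. real (Sl i) \<le> usize (u i)} \<inter> {u. usize (u i) \<le> real (Su i)})"
      by (auto simp: size_ok_def)
    then show ?thesis
      by (simp only:) (intro closed_INT ballI closed_Int closed_Collect_le continuous_intros)
  qed (simp add: size_ok_def)
  then show ?thesis unfolding feasible_set_def using compact_relaxed_set by (simp add: compact_Int_closed)
qed

lemma mix_in_relaxed_set:
  assumes t: "0 \<le> t" "t \<le> 1" and "u \<in> relaxed_set" "v \<in> relaxed_set"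
  shows "mix t u v \<in> relaxed_set"
proof -
  have "mix t u v i x \<in> label_range i" for i x
  proof -
    have "u i x \<in> label_range i" "v i x \<in> label_range i"
      using assms(3,4) by (auto simp: relaxed_set_def)
    moreover have "t * a + (1 - t) * b \<in> {0..1}" if "a \<in> {0..1}" "b \<in> {0..1}" for a b :: real
      using that t convex_bound_le[of a 1 b t "1 - t"] by simp
    ultimately show ?thesis by (cases "i \<in> {1..n}") (auto simp: mix_def label_range_def)
  qed
  moreover have "(\<Sum>i\<in>{1..n}. mix t u v i x) = 1" for x
    using assms(3,4) by (simp add: mix_def sum.distrib sum_distrib_left[symmetric] relaxed_set_def)
  ultimately show ?thesis by (simp add: relaxed_set_def)
qed

lemma Lagr_mix: "L (mix t u v) q r1 r2 = t * L u q r1 r2 + (1 - t) * L v q r1 r2"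
proof -
  have "(\<Sum>i\<in>{1..n}. \<Sum>x\<in>UNIV. mix t u v i x * coef w C q r1 r2 i x)
    = t * (\<Sum>i\<in>{1..n}. \<Sum>x\<in>UNIV. u i x * coef w C q r1 r2 i x)
      + (1 - t) * (\<Sum>i\<in>{1..n}. \<Sum>x\<in>UNIV. v i x * coef w C q r1 r2 i x)"
    unfolding mix_def by (simp add: distrib_right sum.distrib sum_distrib_left mult.assoc)
  then show ?thesis unfolding Lagr_def by (simp add: algebra_simps)
qed

lemma usize_mix: "usize (mix t u v i) = t * usize (u i) + (1 - t) * usize (v i)"
  unfolding usize_def mix_def by (simp add: sum.distrib sum_distrib_left)

text \<open>A feasible point spreads each label uniformly over \<open>V\<close>, with target sizes
  interpolating between \<open>S\<^sup>\<ell>\<close> and \<open>S\<^sup>u\<close> so that they sum to \<open>|V|\<close>.\<close>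

lemma feasible_set_nonempty: "feasible_set \<noteq> {}"
proof -
  define N where "N = real CARD('v)"
  define a where "a = real (\<Sum>i\<in>{1..n}. Sl i)"
  define b where "b = real (\<Sum>i\<in>{1..n}. Su i)"
  define \<theta> where "\<theta> = (if b = a then 0 else (N - a) / (b - a))"
  define s where "s i = real (Sl i) + \<theta> * (real (Su i) - real (Sl i))" for i
  have N_pos: "N > 0" by (simp add: N_def)
  have "a \<le> N" "N \<le> b"
    unfolding a_def b_def N_def of_nat_le_iff by (fact sum_Sl_le_card card_le_sum_Su)+
  then have \<theta>: "0 \<le> \<theta>" "\<theta> \<le> 1" by (auto simp: \<theta>_def field_simps)
  have s_bounds: "real (Sl i) \<le> s i \<and> s i \<le> real (Su i)" if "i \<in> {1..n}" for i
    using Sl_le_Su[OF that] \<theta> mult_left_le_one_le[of "real (Su i) - real (Sl i)" \<theta>]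
    by (simp add: s_def)
  have sum_s: "(\<Sum>i\<in>{1..n}. s i) = N"
  proof -
    have "(\<Sum>i\<in>{1..n}. s i) = a + \<theta> * (b - a)"
      unfolding s_def a_def b_def by (simp add: sum.distrib sum_distrib_left[symmetric] sum_subtractf)
    then show ?thesis using \<open>a \<le> N\<close> \<open>N \<le> b\<close> by (auto simp: \<theta>_def)
  qed
  have s_nonneg: "0 \<le> s i" if "i \<in> {1..n}" for i
    using s_bounds[OF that] of_nat_0_le_iff[of "Sl i"] by linarith
  have s_le_N: "s i \<le> N" if "i \<in> {1..n}" for i
    unfolding sum_s[symmetric] using that s_nonneg by (intro member_le_sum) auto
  define u where "u i x = (if i \<in> {1..n} then s i / N else 0)" for i and x :: 'v
  have "u \<in> relaxed_set"
    using s_nonneg s_le_N N_pos sum_s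
    by (auto simp: relaxed_set_def label_range_def u_def sum_divide_distrib[symmetric])
  moreover have "size_ok n Sl Su \<gamma> u"
    using s_bounds N_pos by (simp add: size_ok_def usize_def u_def N_def)
  ultimately show ?thesis by (auto simp: feasible_set_def)
qed

lemma continuous_on_energy: "continuous_on S En"
proof -
  have "continuous_on S (\<lambda>u. \<Sum>i\<in>{1..n}. Pgam g (Sl i) (Su i) (usize (u i)))" for g
  proof -
    have "continuous_on S (\<lambda>u. \<Sum>i\<in>{1..n}. g * max 0 (usize (u i) - real (Su i))
        + g * max 0 (real (Sl i) - usize (u i)))"
      by (intro continuous_intros)
    also have "(\<lambda>u. \<Sum>i\<in>{1..n}. g * max 0 (usize (u i) - real (Su i))
        + g * max 0 (real (Sl i) - usize (u i)))
      = (\<lambda>u. \<Sum>i\<in>{1..n}. Pgam g (Sl i) (Su i) (usize (u i)))"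
      using Sl_le_Su by (intro ext sum.cong) (auto simp: Pgam_eq_pos_parts)
    finally show ?thesis .
  qed
  then have cont_penalty: "continuous_on S (\<lambda>u. if \<gamma> = \<infinity> then 0
      else \<Sum>i\<in>{1..n}. Pgam (real_of_ereal \<gamma>) (Sl i) (Su i) (usize (u i)))"
    by (cases "\<gamma> = \<infinity>") auto
  show ?thesis unfolding energy_def
    by (rule continuous_on_add[OF continuous_on_add cont_penalty]; intro continuous_intros)
qed

lemma relaxed_sol_exists: "\<exists>u. relaxed_sol n w C Sl Su \<gamma> u"
proof -
  obtain u where u: "u \<in> feasible_set" and minimal: "\<And>v. v \<in> feasible_set \<Longrightarrow> En u \<le> En v"
    using continuous_attains_inf[OF compact_feasible_set feasible_set_nonempty continuous_on_energy]
    by blast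
  have "relaxed_sol n w C Sl Su \<gamma> u"
    unfolding relaxed_sol_def
  proof (intro conjI allI impI)
    show "inBrel n u" "size_ok n Sl Su \<gamma> u"
      using u by (auto simp: feasible_set_def relaxed_set_inBrel)
    fix u' :: "nat \<Rightarrow> 'v \<Rightarrow> real" assume "inBrel n u' \<and> size_ok n Sl Su \<gamma> u'"
    then have "restrict_labels u' \<in> feasible_set"
      by (simp add: feasible_set_def restrict_labels_in_relaxed_set size_ok_restrict_labels)
    then show "En u \<le> En u'" using minimal energy_restrict_labels by metis
  qed
  then show ?thesis by blast
qed

section \<open>Strong duality\<close>

abbreviation "Ld u (d::'v dual_point) \<equiv> L u (fst d) (fst (snd d)) (snd (snd d))"
abbreviation "Dd (d::'v dual_point) \<equiv> D (fst d) (fst (snd d)) (snd (snd d))"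

lemma Lagr_convex_comb:
  assumes "finite K" "(\<Sum>k\<in>K. lam k) = 1"
  shows "L u (\<lambda>i x y. \<Sum>k\<in>K. lam k * Q k i x y) (\<lambda>i. \<Sum>k\<in>K. lam k * R1 k i) (\<lambda>i. \<Sum>k\<in>K. lam k * R2 k i)
    = (\<Sum>k\<in>K. lam k * L u (Q k) (R1 k) (R2 k))"
proof -
  have data: "(\<Sum>k\<in>K. lam k * (\<Sum>i\<in>{1..n}. \<Sum>x\<in>UNIV. C i x * u i x))
      = (\<Sum>i\<in>{1..n}. \<Sum>x\<in>UNIV. C i x * u i x)"
    using assms(2) by (simp add: sum_distrib_right[symmetric])
  have flow: "(\<Sum>i\<in>{1..n}. \<Sum>x\<in>UNIV. u i x * divw w (\<lambda>x y. \<Sum>k\<in>K. lam k * Q k i x y) x)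
      = (\<Sum>k\<in>K. lam k * (\<Sum>i\<in>{1..n}. \<Sum>x\<in>UNIV. u i x * divw w (Q k i) x))"
    unfolding divw_convex_comb sum_distrib_left
    by (subst sum.swap, rule sum.cong, rule refl, subst sum.swap) (simp add: algebra_simps)
  have "(\<Sum>i\<in>{1..n}. (\<Sum>k\<in>K. lam k * R2 k i) * (usize (u i) - real (Su i))
        + (\<Sum>k\<in>K. lam k * R1 k i) * (real (Sl i) - usize (u i)))
      = (\<Sum>i\<in>{1..n}. \<Sum>k\<in>K. lam k * (R2 k i * (usize (u i) - real (Su i))
        + R1 k i * (real (Sl i) - usize (u i))))" (is "?size = _")
    by (intro sum.cong refl)
      (simp add: sum_distrib_right sum.distrib[symmetric] distrib_left mult.assoc)
  also have "\<dots> = (\<Sum>k\<in>K. lam k * (\<Sum>i\<in>{1..n}. R2 k i * (usize (u i) - real (Su i))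
        + R1 k i * (real (Sl i) - usize (u i))))" (is "_ = ?size'")
    unfolding sum_distrib_left by (rule sum.swap)
  finally have size: "?size = ?size'" .
  show ?thesis unfolding Lagr_eq_data_flow_size_terms flow size
    by (simp only: distrib_left sum.distrib data)
qed

lemma Lagr_split_multipliers:
  "L u q r1 r2 = L u q (\<lambda>_. 0) (\<lambda>_. 0)
     + (\<Sum>i\<in>{1..n}. r2 i * (usize (u i) - real (Su i)) + r1 i * (real (Sl i) - usize (u i)))"
  unfolding Lagr_eq_data_flow_size_terms by simp

definition flow_range :: "nat \<Rightarrow> real set" where
  "flow_range i = (if i \<in> {1..n} then {-1..1} else {0})"

definition multiplier_range :: "real \<Rightarrow> nat \<Rightarrow> real set" where
  "multiplier_range M i = (if i \<in> {1..n} then {0..M} else {0})"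

definition dual_box :: "real \<Rightarrow> 'v dual_point set" where
  "dual_box M = {(q, r1, r2). (\<forall>i x y. q i x y \<in> flow_range i) \<and>
     (\<forall>i. r1 i \<in> multiplier_range M i) \<and> (\<forall>i. r2 i \<in> multiplier_range M i)}"

lemma flow_range_label [simp]: "i \<in> {1..n} \<Longrightarrow> flow_range i = {-1..1}"
  and multiplier_range_label [simp]: "i \<in> {1..n} \<Longrightarrow> multiplier_range M i = {0..M}"
  by (simp_all add: flow_range_def multiplier_range_def)

lemma convex_flow_range: "convex (flow_range i)"
  and convex_multiplier_range: "convex (multiplier_range M i)"
  by (simp_all add: flow_range_def multiplier_range_def)

lemma compact_dual_box: "compact (dual_box M)"
proof -
  have "dual_box M = Pi\<^sub>E UNIV (\<lambda>i. Pi\<^sub>E UNIV (\<lambda>x. Pi\<^sub>E UNIV (\<lambda>y. flow_range i)))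
      \<times> Pi\<^sub>E UNIV (multiplier_range M) \<times> Pi\<^sub>E UNIV (multiplier_range M)"
    by (auto simp: dual_box_def PiE_iff)
  then show ?thesis
    by (simp only:) (intro compact_Times compact_PiE_UNIV, auto simp: flow_range_def multiplier_range_def)
qed

lemma dual_feas_dual_box:
  assumes M: "ereal M \<le> \<gamma>" and d: "d \<in> dual_box M"
  shows "dual_feas n \<gamma> (fst d) (fst (snd d)) (snd (snd d))"
proof -
  have ranges: "fst d i x y \<in> flow_range i \<and> fst (snd d) i \<in> multiplier_range M i \<and>
      snd (snd d) i \<in> multiplier_range M i" for i x y
    using d by (auto simp: dual_box_def)
  have "\<bar>fst d i x y\<bar> \<le> 1 \<and> fst (snd d) i \<in> {0..M} \<and> snd (snd d) i \<in> {0..M}"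
    if "i \<in> {1..n}" for i x y
    using ranges[of i x y] that by (simp add: abs_le_iff)
  moreover have "ereal r \<le> \<gamma>" if "r \<le> M" for r
    using M that by (meson ereal_less_eq(3) order_trans)
  ultimately show ?thesis by (simp add: dual_feas_def)
qed

definition convex_comb :: "'v dual_point set \<Rightarrow> ('v dual_point \<Rightarrow> real) \<Rightarrow> 'v dual_point" where
  "convex_comb K lam = (\<lambda>i x y. \<Sum>k\<in>K. lam k * fst k i x y,
     \<lambda>i. \<Sum>k\<in>K. lam k * fst (snd k) i, \<lambda>i. \<Sum>k\<in>K. lam k * snd (snd k) i)"

lemma convex_comb_in_dual_box:
  assumes K: "finite K" "K \<subseteq> dual_box M" and lam: "\<And>k. k \<in> K \<Longrightarrow> lam k \<ge> 0" "(\<Sum>k\<in>K. lam k) = 1"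
  shows "convex_comb K lam \<in> dual_box M"
proof -
  have "(\<Sum>k\<in>K. lam k * fst k i x y) \<in> flow_range i" for i x y
    using K lam by (intro convex_sum_real convex_flow_range) (auto simp: dual_box_def)
  moreover have "(\<Sum>k\<in>K. lam k * fst (snd k) i) \<in> multiplier_range M i"
    "(\<Sum>k\<in>K. lam k * snd (snd k) i) \<in> multiplier_range M i" for i
    using K lam by (intro convex_sum_real convex_multiplier_range; auto simp: dual_box_def)+
  ultimately show ?thesis by (simp add: convex_comb_def dual_box_def)
qed

lemma Lagr_at_convex_comb:
  "finite K \<Longrightarrow> (\<Sum>k\<in>K. lam k) = 1 \<Longrightarrow> Ld u (convex_comb K lam) = (\<Sum>k\<in>K. lam k * Ld u k)"
  unfolding convex_comb_def by (simp add: Lagr_convex_comb)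

lemma continuous_on_dual_obj: "continuous_on S Dd"
proof -
  have [continuous_intros]: "continuous_on S (\<lambda>d::'v dual_point. fst d i x y)" for i x y
    by (rule continuous_on_compose2[OF continuous_on_coordinate3[of UNIV] continuous_on_fst]) auto
  have [continuous_intros]: "continuous_on S (\<lambda>d::'v dual_point. fst (snd d) i)" for i
    by (rule continuous_on_compose2[OF continuous_on_coordinate[of UNIV]
          continuous_on_fst[OF continuous_on_snd[OF continuous_on_id]]]) simp
  have [continuous_intros]: "continuous_on S (\<lambda>d::'v dual_point. snd (snd d) i)" for i
    by (rule continuous_on_compose2[OF continuous_on_coordinate[of UNIV]
          continuous_on_snd[OF continuous_on_snd[OF continuous_on_id]]]) simp
  have min_cont: "continuous_on S (\<lambda>d::'v dual_point. min_coef (fst d) (fst (snd d)) (snd (snd d)) x)" for x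
    using n_pos unfolding coef_def divw_def
    by (intro continuous_on_Min_image) (auto intro!: continuous_intros)
  show ?thesis
    unfolding dual_obj_def by (intro continuous_intros min_cont)
qed

lemma dual_value_attained:
  assumes "compact B" and approx: "\<And>c. c < p \<Longrightarrow> \<exists>d\<in>B. c < Dd d"
  shows "\<exists>d\<in>B. p \<le> Dd d"
proof -
  have "B \<noteq> {}" using approx[of "p - 1"] by auto
  then obtain d where d: "d \<in> B" and max: "\<And>d'. d' \<in> B \<Longrightarrow> Dd d' \<le> Dd d"
    using continuous_attains_sup[OF assms(1) _ continuous_on_dual_obj] by blast
  have "c \<le> Dd d" if c: "c < p" for c
  proof -
    obtain d' where "d' \<in> B" "c < Dd d'" using approx[OF c] by blast
    then show ?thesis using max[of d'] by linarith
  qed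
  then have "p \<le> Dd d" by (rule dense_le)
  with d show ?thesis by blast
qed

definition vertex_flows :: "(nat \<Rightarrow> 'v \<Rightarrow> 'v \<Rightarrow> real) set" where
  "vertex_flows = {q. (\<forall>i. i \<notin> {1..n} \<longrightarrow> q i = (\<lambda>x y. 0)) \<and> (\<forall>i\<in>{1..n}. q i \<in> sign_flows)}"

definition vertex_multipliers :: "(nat \<Rightarrow> real) set" where
  "vertex_multipliers = {r. (\<forall>i. i \<notin> {1..n} \<longrightarrow> r i = 0) \<and> (\<forall>i\<in>{1..n}. r i \<in> {0, gamma_fin})}"

lemma finite_vertex_flows: "finite vertex_flows"
  unfolding vertex_flows_def using finite_sign_flows by (intro finite_functions_fixed_outside) auto

lemma finite_vertex_set: "finite (vertex_flows \<times> vertex_multipliers \<times> vertex_multipliers)"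
  using finite_vertex_flows unfolding vertex_multipliers_def
  by (intro finite_cartesian_product finite_functions_fixed_outside) auto

lemma vertex_flows_in_flow_range:
  assumes "q \<in> vertex_flows"
  shows "q i x y \<in> flow_range i"
proof (cases "i \<in> {1..n}")
  case True
  with assms have "q i x y \<in> {-1, 1}" by (simp add: vertex_flows_def sign_flows_def)
  with True show ?thesis by auto
qed (use assms in \<open>simp add: vertex_flows_def flow_range_def\<close>)

lemma vertex_multipliers_in_multiplier_range:
  assumes "r \<in> vertex_multipliers"
  shows "r i \<in> multiplier_range gamma_fin i"
proof (cases "i \<in> {1..n}")
  case True
  with assms have "r i \<in> {0, gamma_fin}" by (simp add: vertex_multipliers_def)
  with True gamma_fin_nonneg show ?thesis by auto
qed (use assms gamma_fin_nonneg in \<open>simp add: vertex_multipliers_def multiplier_range_def\<close>)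

lemma vertex_set_subset_dual_box:
  "vertex_flows \<times> vertex_multipliers \<times> vertex_multipliers \<subseteq> dual_box gamma_fin"
  by (auto simp: dual_box_def vertex_flows_in_flow_range vertex_multipliers_in_multiplier_range)

lemma vertex_in_vertex_set:
  "(vertex_flow u, vertex_r1 u, vertex_r2 u) \<in> vertex_flows \<times> vertex_multipliers \<times> vertex_multipliers"
  by (auto simp: vertex_flows_def vertex_multipliers_def sign_flows_def vertex_flow_def
      vertex_r1_def vertex_r2_def sign_flow_def)

text \<open>For finite \<open>\<gamma>\<close> the energy is the largest vertex Lagrangian, so at every \<open>u\<close> some vertex
  Lagrangian exceeds \<open>c\<close>; the alternative averages the vertices into one dual point that does
  so uniformly, and its dual value is its Lagrangian at the argmin assignment.\<close>

lemma dual_values_approach_energy_finite: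
  assumes fin: "\<gamma> \<noteq> \<infinity>" and us: "relaxed_sol n w C Sl Su \<gamma> us" and c: "c < En us"
  shows "\<exists>d\<in>dual_box gamma_fin. c < Dd d"
proof -
  define K where "K = vertex_flows \<times> vertex_multipliers \<times> vertex_multipliers"
  have "\<exists>lam. (\<forall>k\<in>K. 0 \<le> lam k) \<and> (\<Sum>k\<in>K. lam k) = 1 \<and>
      (\<forall>u\<in>relaxed_set. (\<Sum>k\<in>K. lam k * (Ld u k - c)) > 0)"
  proof (rule convex_combination_positive_everywhere[where mix=mix])
    show "compact relaxed_set" "relaxed_set \<noteq> {}" "finite K"
      using compact_relaxed_set feasible_set_nonempty finite_vertex_set
      by (auto simp: feasible_set_def K_def)
    show "continuous_on relaxed_set (\<lambda>u. Ld u k - c)" for k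
      unfolding Lagr_def by (intro continuous_intros)
    show "mix t u v \<in> relaxed_set" if "0 \<le> t" "t \<le> 1" "u \<in> relaxed_set" "v \<in> relaxed_set" for t u v
      using mix_in_relaxed_set that by blast
    show "Ld (mix t u v) k - c = t * (Ld u k - c) + (1 - t) * (Ld v k - c)" for k t u v
      by (simp add: Lagr_mix algebra_simps)
    show "\<exists>k\<in>K. Ld u k - c > 0" if "u \<in> relaxed_set" for u
    proof
      show "(vertex_flow u, vertex_r1 u, vertex_r2 u) \<in> K"
        unfolding K_def by (rule vertex_in_vertex_set)
      have "En us \<le> En u"
        using us relaxed_set_inBrel[OF that] fin by (simp add: relaxed_sol_def size_ok_def)
      then show "Ld u (vertex_flow u, vertex_r1 u, vertex_r2 u) - c > 0"
        using c by (simp add: Lagr_vertex)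
    qed
  qed
  then obtain lam where lam: "\<forall>k\<in>K. 0 \<le> lam k" "(\<Sum>k\<in>K. lam k) = 1"
    "\<forall>u\<in>relaxed_set. (\<Sum>k\<in>K. lam k * (Ld u k - c)) > 0" by blast
  define d where "d = convex_comb K lam"
  define u where "u = argmin_assignment (fst d) (fst (snd d)) (snd (snd d))"
  have "Dd d = Ld u d" by (simp add: u_def Lagr_argmin_assignment)
  also have "\<dots> = (\<Sum>k\<in>K. lam k * Ld u k)"
    unfolding d_def using finite_vertex_set lam(2) by (simp add: K_def Lagr_at_convex_comb)
  also have "\<dots> = (\<Sum>k\<in>K. lam k * (Ld u k - c)) + c"
    using lam(2) by (simp add: right_diff_distrib sum_subtractf sum_distrib_right[symmetric])
  finally have "Dd d = (\<Sum>k\<in>K. lam k * (Ld u k - c)) + c" .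
  moreover have "u \<in> relaxed_set"
    unfolding u_def by (rule argmin_assignment_in_relaxed_set)
  moreover have "d \<in> dual_box gamma_fin"
    unfolding d_def K_def using lam finite_vertex_set vertex_set_subset_dual_box
    by (intro convex_comb_in_dual_box) (auto simp: K_def)
  ultimately show ?thesis using lam(3) by force
qed

definition coef_bound :: real where
  "coef_bound = (\<Sum>i\<in>{1..n}. \<Sum>x\<in>UNIV. \<bar>C i x\<bar>) + (\<Sum>x\<in>UNIV. \<Sum>y\<in>UNIV. w x y)"

lemma coef_bound_nonneg: "coef_bound \<ge> 0"
  unfolding coef_bound_def using w_nonneg by (intro add_nonneg_nonneg sum_nonneg) auto

lemma abs_data_divw_le_coef_bound:
  assumes \<phi>: "\<And>x y. \<bar>\<phi> x y\<bar> \<le> 1" and i: "i \<in> {1..n}"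
  shows "\<bar>C i x + divw w \<phi> x\<bar> \<le> coef_bound"
proof -
  have "\<bar>divw w \<phi> x\<bar> \<le> (1/2) * (\<Sum>y\<in>UNIV. \<bar>w x y * (\<phi> x y - \<phi> y x)\<bar>)"
    unfolding divw_def by (simp add: sum_abs)
  also have "\<dots> \<le> (1/2) * (\<Sum>y\<in>UNIV. w x y * 2)"
  proof (intro mult_left_mono sum_mono)
    fix y
    have "\<bar>\<phi> x y - \<phi> y x\<bar> \<le> 2" using \<phi>[of x y] \<phi>[of y x] by linarith
    then show "\<bar>w x y * (\<phi> x y - \<phi> y x)\<bar> \<le> w x y * 2"
      using w_nonneg[of x y] by (simp add: abs_mult mult_left_mono)
  qed simp
  also have "\<dots> \<le> (\<Sum>x\<in>UNIV. \<Sum>y\<in>UNIV. w x y)"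
    using w_nonneg by (simp add: sum_distrib_right[symmetric]) (intro member_le_sum sum_nonneg; simp)
  finally have "\<bar>divw w \<phi> x\<bar> \<le> (\<Sum>x\<in>UNIV. \<Sum>y\<in>UNIV. w x y)" .
  moreover have "\<bar>C i x\<bar> \<le> (\<Sum>i\<in>{1..n}. \<Sum>x\<in>UNIV. \<bar>C i x\<bar>)"
    using i member_le_sum[of x UNIV "\<lambda>x. \<bar>C i x\<bar>"]
      member_le_sum[of i "{1..n}" "\<lambda>i. \<Sum>x\<in>UNIV. \<bar>C i x\<bar>"]
    by (simp add: sum_nonneg)
  ultimately show ?thesis unfolding coef_bound_def by linarith
qed

text \<open>The dual objective as a function of \<open>\<delta> = \<rho>\<^sup>2 - \<rho>\<^sup>1\<close> alone, the multipliers being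
  taken as the positive and negative parts of \<open>\<delta>\<close>; this choice is optimal.\<close>

definition reduced_dual :: "(nat \<Rightarrow> 'v \<Rightarrow> 'v \<Rightarrow> real) \<Rightarrow> (nat \<Rightarrow> real) \<Rightarrow> real" where
  "reduced_dual q \<delta> = (\<Sum>x\<in>UNIV. Min ((\<lambda>i. C i x + divw w (q i) x + \<delta> i) ` {1..n}))
     + (\<Sum>i\<in>{1..n}. max 0 (- \<delta> i) * real (Sl i) - max 0 (\<delta> i) * real (Su i))"

lemma dual_obj_le_reduced_dual:
  assumes "\<And>i. i \<in> {1..n} \<Longrightarrow> 0 \<le> r1 i \<and> 0 \<le> r2 i"
  shows "D q r1 r2 \<le> reduced_dual q (\<lambda>i. r2 i - r1 i)"
proof -
  have "(\<lambda>i. coef w C q r1 r2 i x) ` {1..n} = (\<lambda>i. C i x + divw w (q i) x + (r2 i - r1 i)) ` {1..n}" for x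
    by (intro image_cong refl) (auto simp: coef_def)
  moreover have "(\<Sum>i\<in>{1..n}. r1 i * real (Sl i) - r2 i * real (Su i))
      \<le> (\<Sum>i\<in>{1..n}. max 0 (- (r2 i - r1 i)) * real (Sl i) - max 0 (r2 i - r1 i) * real (Su i))"
    using assms Sl_le_Su by (intro sum_mono) (simp add: multiplier_terms_le_pos_parts)
  ultimately show ?thesis unfolding dual_obj_def reduced_dual_def by simp
qed

lemma dual_obj_pos_parts:
  "D q (\<lambda>i. if i \<in> {1..n} then max 0 (- \<delta> i) else 0) (\<lambda>i. if i \<in> {1..n} then max 0 (\<delta> i) else 0)
    = reduced_dual q \<delta>"
proof -
  have "(\<lambda>i. coef w C q (\<lambda>i. if i \<in> {1..n} then max 0 (- \<delta> i) else 0)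
        (\<lambda>i. if i \<in> {1..n} then max 0 (\<delta> i) else 0) i x) ` {1..n}
      = (\<lambda>i. C i x + divw w (q i) x + \<delta> i) ` {1..n}" for x
    by (intro image_cong refl) (auto simp: coef_def max_def)
  then show ?thesis unfolding dual_obj_def reduced_dual_def
    by (intro arg_cong2[where f="(+)"] sum.cong refl) auto
qed

text \<open>Capping \<open>\<delta>\<close> at \<open>min \<delta> + 2 coef_bound\<close> leaves every minimum unchanged, since the
  capped labels can no longer attain it, and can only increase the size terms.\<close>

lemma reduced_dual_cap:
  assumes q: "\<And>i x y. i \<in> {1..n} \<Longrightarrow> \<bar>q i x y\<bar> \<le> 1"
    and m: "\<And>i. i \<in> {1..n} \<Longrightarrow> m \<le> \<delta> i" "i0 \<in> {1..n}" "\<delta> i0 = m"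
  shows "reduced_dual q \<delta> \<le> reduced_dual q (\<lambda>i. min (\<delta> i) (m + 2 * coef_bound))"
proof -
  let ?a = "\<lambda>i x. C i x + divw w (q i) x"
  let ?cap = "\<lambda>i. min (\<delta> i) (m + 2 * coef_bound)"
  have bound: "\<bar>?a i x\<bar> \<le> coef_bound" if "i \<in> {1..n}" for i x
    using abs_data_divw_le_coef_bound[OF q[OF that] that] .
  have mins: "Min ((\<lambda>i. ?a i x + ?cap i) ` {1..n}) = Min ((\<lambda>i. ?a i x + \<delta> i) ` {1..n})" for x
  proof (rule antisym)
    have "Min ((\<lambda>i. ?a i x + \<delta> i) ` {1..n}) \<in> (\<lambda>i. ?a i x + \<delta> i) ` {1..n}"
      using m(2) by (intro Min_in) auto
    then obtain j where j: "j \<in> {1..n}" "Min ((\<lambda>i. ?a i x + \<delta> i) ` {1..n}) = ?a j x + \<delta> j"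
      by auto
    have "Min ((\<lambda>i. ?a i x + ?cap i) ` {1..n}) \<le> ?a j x + ?cap j"
      using j by (intro Min_le) auto
    also have "\<dots> \<le> ?a j x + \<delta> j" by simp
    finally show "Min ((\<lambda>i. ?a i x + ?cap i) ` {1..n}) \<le> Min ((\<lambda>i. ?a i x + \<delta> i) ` {1..n})"
      using j by simp
    have "Min ((\<lambda>i. ?a i x + \<delta> i) ` {1..n}) \<le> ?a i x + ?cap i" if i: "i \<in> {1..n}" for i
    proof -
      have "Min ((\<lambda>i. ?a i x + \<delta> i) ` {1..n}) \<le> ?a i x + \<delta> i"
        "Min ((\<lambda>i. ?a i x + \<delta> i) ` {1..n}) \<le> ?a i0 x + \<delta> i0"
        using i m(2) by (auto intro: Min_le)
      moreover have "?a i0 x \<le> coef_bound" "- coef_bound \<le> ?a i x"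
        using bound[OF m(2), of x] bound[OF i, of x] by linarith+
      ultimately show ?thesis using m(3) by (auto simp: min_def)
    qed
    then show "Min ((\<lambda>i. ?a i x + \<delta> i) ` {1..n}) \<le> Min ((\<lambda>i. ?a i x + ?cap i) ` {1..n})"
      using m(2) by (intro Min.boundedI) auto
  qed
  have "(\<Sum>i\<in>{1..n}. max 0 (- \<delta> i) * real (Sl i) - max 0 (\<delta> i) * real (Su i))
     \<le> (\<Sum>i\<in>{1..n}. max 0 (- ?cap i) * real (Sl i) - max 0 (?cap i) * real (Su i))"
    by (intro sum_mono pos_parts_terms_antimono) auto
  then show ?thesis unfolding reduced_dual_def mins by simp
qed

text \<open>Shifting all of \<open>\<delta>\<close> by \<open>s\<close> towards \<open>0\<close> lowers the minima by \<open>|V| s\<close> but raises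
  the size terms by \<open>s \<Sum> S\<^sup>u\<close> (resp.\ \<open>s \<Sum> S\<^sup>\<ell>\<close>), which is at least as much.\<close>

lemma reduced_dual_shift:
  assumes "(0 < s \<and> (\<forall>i\<in>{1..n}. s \<le> \<delta> i)) \<or> (s < 0 \<and> (\<forall>i\<in>{1..n}. \<delta> i \<le> s))"
  shows "reduced_dual q \<delta> \<le> reduced_dual q (\<lambda>i. \<delta> i - s)"
proof -
  define S where "S i = (if 0 < s then Su i else Sl i)" for i
  have "Min ((\<lambda>i. C i x + divw w (q i) x + (\<delta> i - s)) ` {1..n})
      = Min ((\<lambda>i. C i x + divw w (q i) x + \<delta> i) ` {1..n}) - s" for x
    using Min_add_commute[of "{1..n}" "\<lambda>i. C i x + divw w (q i) x + \<delta> i" "- s"] n_pos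
    by (simp add: algebra_simps)
  then have mins: "(\<Sum>x\<in>UNIV. Min ((\<lambda>i. C i x + divw w (q i) x + (\<delta> i - s)) ` {1..n}))
      = (\<Sum>x\<in>UNIV. Min ((\<lambda>i. C i x + divw w (q i) x + \<delta> i) ` {1..n})) - real CARD('v) * s"
    by (simp add: sum_subtractf)
  have "max 0 (- (\<delta> i - s)) * real (Sl i) - max 0 (\<delta> i - s) * real (Su i)
      = (max 0 (- \<delta> i) * real (Sl i) - max 0 (\<delta> i) * real (Su i)) + s * real (S i)"
    if "i \<in> {1..n}" for i
  proof (cases "0 < s")
    case True
    with assms that have "s \<le> \<delta> i" by auto
    with True show ?thesis by (simp add: S_def max_def algebra_simps)
  next
    case False
    with assms that have "\<delta> i \<le> s" "s < 0" by auto
    with False show ?thesis by (simp add: S_def max_def algebra_simps)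
  qed
  then have sizes: "(\<Sum>i\<in>{1..n}. max 0 (- (\<delta> i - s)) * real (Sl i) - max 0 (\<delta> i - s) * real (Su i))
      = (\<Sum>i\<in>{1..n}. max 0 (- \<delta> i) * real (Sl i) - max 0 (\<delta> i) * real (Su i))
        + s * real (\<Sum>i\<in>{1..n}. S i)"
    by (simp add: sum.distrib sum_distrib_left)
  have "real CARD('v) * s \<le> real (\<Sum>i\<in>{1..n}. S i) * s"
  proof (cases "0 < s")
    case True
    have "real CARD('v) \<le> real (\<Sum>i\<in>{1..n}. Su i)" unfolding of_nat_le_iff by (rule card_le_sum_Su)
    from mult_right_mono[OF this, of s] True show ?thesis by (simp add: S_def)
  next
    case False
    with assms have "s < 0" by auto
    have "real (\<Sum>i\<in>{1..n}. Sl i) \<le> real CARD('v)" unfolding of_nat_le_iff by (rule sum_Sl_le_card)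
    from mult_right_mono_neg[OF this, of s] \<open>s < 0\<close> False show ?thesis by (simp add: S_def)
  qed
  then show ?thesis unfolding reduced_dual_def mins sizes by (simp add: algebra_simps)
qed

lemma reduced_dual_centered:
  assumes q: "\<And>i x y. i \<in> {1..n} \<Longrightarrow> \<bar>q i x y\<bar> \<le> 1"
  shows "\<exists>\<delta>'. (\<forall>i\<in>{1..n}. \<bar>\<delta>' i\<bar> \<le> 2 * coef_bound) \<and> reduced_dual q \<delta> \<le> reduced_dual q \<delta>'"
proof -
  have fin: "finite {1..n}" "{1..n} \<noteq> {}" using n_pos by auto
  define m where "m = Min (\<delta> ` {1..n})"
  have "m \<in> \<delta> ` {1..n}" unfolding m_def using fin by (intro Min_in) auto
  then obtain i0 where i0: "i0 \<in> {1..n}" "\<delta> i0 = m" by auto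
  define \<delta>1 where "\<delta>1 i = min (\<delta> i) (m + 2 * coef_bound)" for i
  have \<delta>1: "m \<le> \<delta>1 i \<and> \<delta>1 i \<le> m + 2 * coef_bound" if "i \<in> {1..n}" for i
    using that coef_bound_nonneg by (auto simp: \<delta>1_def m_def)
  have cap: "reduced_dual q \<delta> \<le> reduced_dual q \<delta>1"
    unfolding \<delta>1_def using q i0 by (intro reduced_dual_cap) (auto simp: m_def)
  define M where "M = Max (\<delta>1 ` {1..n})"
  have M: "\<delta>1 i \<le> M" if "i \<in> {1..n}" for i using that by (auto simp: M_def)
  have "M \<in> \<delta>1 ` {1..n}" unfolding M_def using fin by (intro Max_in) auto
  then have mM: "m \<le> M" "M \<le> m + 2 * coef_bound" using \<delta>1 by auto
  define s where "s = (if 0 < m then m else if M < 0 then M else 0)"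
  have shift: "reduced_dual q \<delta>1 \<le> reduced_dual q (\<lambda>i. \<delta>1 i - s)"
  proof (cases "0 < m \<or> M < 0")
    case True
    then show ?thesis using \<delta>1 M by (intro reduced_dual_shift) (auto simp: s_def)
  qed (simp add: s_def)
  have "\<bar>\<delta>1 i - s\<bar> \<le> 2 * coef_bound" if "i \<in> {1..n}" for i
    using \<delta>1[OF that] M[OF that] mM by (auto simp: s_def)
  with cap shift show ?thesis by (intro exI[of _ "\<lambda>i. \<delta>1 i - s"]) auto
qed

lemma multipliers_clipped:
  assumes q: "\<And>i x y. i \<in> {1..n} \<Longrightarrow> \<bar>q i x y\<bar> \<le> 1"
    and r: "\<And>i. i \<in> {1..n} \<Longrightarrow> 0 \<le> r1 i \<and> 0 \<le> r2 i"
  shows "\<exists>r1' r2'. (\<forall>i. r1' i \<in> multiplier_range (2 * coef_bound) i \<and>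
      r2' i \<in> multiplier_range (2 * coef_bound) i) \<and> D q r1 r2 \<le> D q r1' r2'"
proof -
  obtain \<delta> where \<delta>: "\<forall>i\<in>{1..n}. \<bar>\<delta> i\<bar> \<le> 2 * coef_bound"
    and le: "reduced_dual q (\<lambda>i. r2 i - r1 i) \<le> reduced_dual q \<delta>"
    using reduced_dual_centered[of q "\<lambda>i. r2 i - r1 i", OF q] by blast
  let ?r1 = "\<lambda>i. if i \<in> {1..n} then max 0 (- \<delta> i) else 0"
  let ?r2 = "\<lambda>i. if i \<in> {1..n} then max 0 (\<delta> i) else 0"
  have "?r1 i \<in> multiplier_range (2 * coef_bound) i \<and> ?r2 i \<in> multiplier_range (2 * coef_bound) i" for i
  proof (cases "i \<in> {1..n}")
    case True
    with \<delta> have "\<bar>\<delta> i\<bar> \<le> 2 * coef_bound" by blast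
    with True show ?thesis by (simp add: abs_le_iff)
  qed (use coef_bound_nonneg in \<open>auto simp: multiplier_range_def\<close>)
  moreover have "D q r1 r2 \<le> reduced_dual q (\<lambda>i. r2 i - r1 i)"
    by (rule dual_obj_le_reduced_dual) (rule r)
  then have "D q r1 r2 \<le> D q ?r1 ?r2"
    unfolding dual_obj_pos_parts using le by linarith
  ultimately show ?thesis by (intro exI[of _ ?r1] exI[of _ ?r2]) blast
qed

text \<open>For \<open>\<gamma> = \<infinity>\<close> the size constraints enter the alternative as additional affine
  functions, weighted by \<open>lT\<close> (lower bounds) and \<open>lF\<close> (upper bounds); after normalisation by
  the total weight of the flow vertices these weights become the multipliers.\<close>

definition weighted_alternative ::
  "((nat \<Rightarrow> 'v \<Rightarrow> 'v \<Rightarrow> real) \<Rightarrow> real) \<Rightarrow> (nat \<Rightarrow> real) \<Rightarrow> (nat \<Rightarrow> real) \<Rightarrow> real \<Rightarrow> (nat \<Rightarrow> 'v \<Rightarrow> real) \<Rightarrow> real"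
  where
  "weighted_alternative lq lT lF c u = (\<Sum>q\<in>vertex_flows. lq q * (L u q (\<lambda>_. 0) (\<lambda>_. 0) - c))
     + (\<Sum>i\<in>{1..n}. lT i * (real (Sl i) - usize (u i)) + lF i * (usize (u i) - real (Su i)))"

lemma vertex_or_size_violation:
  assumes inf: "\<gamma> = \<infinity>" and us: "relaxed_sol n w C Sl Su \<gamma> us" and c: "c < En us"
    and u: "u \<in> relaxed_set"
  shows "c < L u (vertex_flow u) (\<lambda>_. 0) (\<lambda>_. 0) \<or>
    (\<exists>i\<in>{1..n}. usize (u i) < real (Sl i) \<or> real (Su i) < usize (u i))"
proof (cases "size_ok n Sl Su \<gamma> u")
  case True
  have "En us \<le> En u" using us relaxed_set_inBrel[OF u] True by (simp add: relaxed_sol_def)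
  moreover have "vertex_r1 u = (\<lambda>_. 0)" "vertex_r2 u = (\<lambda>_. 0)"
    unfolding vertex_r1_def vertex_r2_def gamma_fin_def using inf by auto
  ultimately show ?thesis using c Lagr_vertex[of u] by simp
next
  case False
  then show ?thesis using inf by (auto simp: size_ok_def not_le)
qed

lemma size_constrained_alternative:
  assumes inf: "\<gamma> = \<infinity>" and us: "relaxed_sol n w C Sl Su \<gamma> us" and c: "c < En us"
  shows "\<exists>lq lT lF. (\<forall>q\<in>vertex_flows. 0 \<le> lq q) \<and> (\<forall>i\<in>{1..n}. 0 \<le> lT i \<and> 0 \<le> lF i) \<and>
    (\<forall>u\<in>relaxed_set. 0 < weighted_alternative lq lT lF c u)"
proof -
  define K where "K = Inl ` vertex_flows \<union> Inr ` ({1..n} \<times> (UNIV :: bool set))"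
  define f where "f k u = (case k of
      Inl q \<Rightarrow> L u q (\<lambda>_. 0) (\<lambda>_. 0) - c
    | Inr (i, lower) \<Rightarrow> if lower then real (Sl i) - usize (u i) else usize (u i) - real (Su i))"
    for k :: "(nat \<Rightarrow> 'v \<Rightarrow> 'v \<Rightarrow> real) + nat \<times> bool" and u
  have "\<exists>lam. (\<forall>k\<in>K. 0 \<le> lam k) \<and> (\<Sum>k\<in>K. lam k) = 1 \<and> (\<forall>u\<in>relaxed_set. (\<Sum>k\<in>K. lam k * f k u) > 0)"
  proof (rule convex_combination_positive_everywhere[where mix=mix])
    show "compact relaxed_set" "relaxed_set \<noteq> {}" "finite K"
      using compact_relaxed_set feasible_set_nonempty finite_vertex_flows
      by (auto simp: feasible_set_def K_def)
    show "continuous_on relaxed_set (f k)" for k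
    proof (cases k)
      case (Inl q)
      then show ?thesis unfolding f_def Lagr_def by simp (intro continuous_intros)
    next
      case (Inr ib)
      then obtain i lower where "k = Inr (i, lower)" by (cases ib) auto
      then show ?thesis unfolding f_def by (cases lower) (simp_all, (intro continuous_intros)+)
    qed
    show "mix t u v \<in> relaxed_set" if "0 \<le> t" "t \<le> 1" "u \<in> relaxed_set" "v \<in> relaxed_set" for t u v
      using mix_in_relaxed_set that by blast
    show "f k (mix t u v) = t * f k u + (1 - t) * f k v" for k t u v
      unfolding f_def by (auto simp: Lagr_mix usize_mix algebra_simps split: sum.split)
    show "\<exists>k\<in>K. f k u > 0" if "u \<in> relaxed_set" for u
      using vertex_or_size_violation[OF assms that]
    proof
      assume "c < L u (vertex_flow u) (\<lambda>_. 0) (\<lambda>_. 0)"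
      moreover have "Inl (vertex_flow u) \<in> K" using vertex_in_vertex_set[of u] by (simp add: K_def)
      ultimately show ?thesis by (force simp: f_def)
    next
      assume "\<exists>i\<in>{1..n}. usize (u i) < real (Sl i) \<or> real (Su i) < usize (u i)"
      then obtain i where "i \<in> {1..n}" "usize (u i) < real (Sl i) \<or> real (Su i) < usize (u i)"
        by blast
      then show ?thesis
        by (intro bexI[of _ "Inr (i, usize (u i) < real (Sl i))"]) (auto simp: K_def f_def)
    qed
  qed
  then obtain lam where lam: "\<forall>k\<in>K. 0 \<le> lam k" "\<forall>u\<in>relaxed_set. (\<Sum>k\<in>K. lam k * f k u) > 0"
    by blast
  have "(\<Sum>k\<in>K. lam k * f k u)
      = weighted_alternative (\<lambda>q. lam (Inl q)) (\<lambda>i. lam (Inr (i, True))) (\<lambda>i. lam (Inr (i, False))) c u" for u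
    unfolding K_def weighted_alternative_def
    by (subst sum_Inl_Inr_bool[OF finite_vertex_flows]) (auto simp: f_def)
  then show ?thesis using lam
    by (intro exI[of _ "\<lambda>q. lam (Inl q)"] exI[of _ "\<lambda>i. lam (Inr (i, True))"]
        exI[of _ "\<lambda>i. lam (Inr (i, False))"]) (auto simp: K_def)
qed

text \<open>At a feasible point the size terms are nonpositive, so the flow vertices carry
  positive total weight.\<close>

lemma flow_weights_pos:
  assumes inf: "\<gamma> = \<infinity>" and us: "relaxed_sol n w C Sl Su \<gamma> us"
    and lq: "\<forall>q\<in>vertex_flows. 0 \<le> lq q" and lTF: "\<forall>i\<in>{1..n}. 0 \<le> lT i \<and> 0 \<le> lF i"
    and pos: "\<forall>u\<in>relaxed_set. 0 < weighted_alternative lq lT lF c u"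
  shows "0 < (\<Sum>q\<in>vertex_flows. lq q)"
proof -
  define u where "u = restrict_labels us"
  have u: "u \<in> relaxed_set" "size_ok n Sl Su \<gamma> u"
    using us by (simp_all add: u_def relaxed_sol_def restrict_labels_in_relaxed_set size_ok_restrict_labels)
  have "lT i * (real (Sl i) - usize (u i)) + lF i * (usize (u i) - real (Su i)) \<le> 0" if "i \<in> {1..n}" for i
    using lTF that u(2) inf by (simp add: size_ok_def add_nonpos_nonpos mult_nonneg_nonpos)
  then have "(\<Sum>i\<in>{1..n}. lT i * (real (Sl i) - usize (u i)) + lF i * (usize (u i) - real (Su i))) \<le> 0"
    by (rule sum_nonpos)
  then have flows_pos: "0 < (\<Sum>q\<in>vertex_flows. lq q * (L u q (\<lambda>_. 0) (\<lambda>_. 0) - c))"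
    using pos u(1) by (fastforce simp: weighted_alternative_def)
  have "(\<Sum>q\<in>vertex_flows. lq q) \<noteq> 0"
  proof
    assume "(\<Sum>q\<in>vertex_flows. lq q) = 0"
    then have "\<forall>q\<in>vertex_flows. lq q = 0"
      using lq finite_vertex_flows by (simp add: sum_nonneg_eq_0_iff)
    with flows_pos show False by simp
  qed
  moreover have "(\<Sum>q\<in>vertex_flows. lq q) \<ge> 0" using lq by (simp add: sum_nonneg)
  ultimately show ?thesis by simp
qed

lemma Lagr_normalised_weights:
  assumes \<Lambda>: "\<Lambda> = (\<Sum>q\<in>vertex_flows. lq q)" "\<Lambda> > 0"
  shows "L u (\<lambda>i x y. \<Sum>q\<in>vertex_flows. lq q / \<Lambda> * q i x y)
      (\<lambda>i. if i \<in> {1..n} then lT i / \<Lambda> else 0) (\<lambda>i. if i \<in> {1..n} then lF i / \<Lambda> else 0) - c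
    = weighted_alternative lq lT lF c u / \<Lambda>"
proof -
  have weights: "(\<Sum>q\<in>vertex_flows. lq q / \<Lambda>) = 1"
    using \<Lambda> by (simp add: sum_divide_distrib[symmetric])
  have "L u (\<lambda>i x y. \<Sum>q\<in>vertex_flows. lq q / \<Lambda> * q i x y) (\<lambda>_. 0) (\<lambda>_. 0)
      = (\<Sum>q\<in>vertex_flows. lq q / \<Lambda> * L u q (\<lambda>_. 0) (\<lambda>_. 0))"
    using Lagr_convex_comb[OF finite_vertex_flows weights, of u "\<lambda>q. q" "\<lambda>_ _. 0" "\<lambda>_ _. 0"]
    by simp
  then have "L u (\<lambda>i x y. \<Sum>q\<in>vertex_flows. lq q / \<Lambda> * q i x y) (\<lambda>_. 0) (\<lambda>_. 0) - c
      = (\<Sum>q\<in>vertex_flows. lq q * (L u q (\<lambda>_. 0) (\<lambda>_. 0) - c)) / \<Lambda>"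
    using weights \<Lambda>
    by (simp add: sum_divide_distrib[symmetric] right_diff_distrib sum_subtractf
        field_simps sum_distrib_left)
  moreover have "(\<Sum>i\<in>{1..n}. (if i \<in> {1..n} then lF i / \<Lambda> else 0) * (usize (u i) - real (Su i))
        + (if i \<in> {1..n} then lT i / \<Lambda> else 0) * (real (Sl i) - usize (u i)))
      = (\<Sum>i\<in>{1..n}. lT i * (real (Sl i) - usize (u i)) + lF i * (usize (u i) - real (Su i))) / \<Lambda>"
    unfolding sum_divide_distrib using \<Lambda> by (intro sum.cong refl) (simp add: field_simps)
  ultimately show ?thesis
    unfolding weighted_alternative_def
    by (subst Lagr_split_multipliers) (simp add: add_divide_distrib)
qed

lemma dual_values_approach_energy_infinite:
  assumes inf: "\<gamma> = \<infinity>" and us: "relaxed_sol n w C Sl Su \<gamma> us" and c: "c < En us"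
  shows "\<exists>d\<in>dual_box (2 * coef_bound). c < Dd d"
proof -
  obtain lq lT lF where lq: "\<forall>q\<in>vertex_flows. 0 \<le> lq q" and lTF: "\<forall>i\<in>{1..n}. 0 \<le> lT i \<and> 0 \<le> lF i"
    and pos: "\<forall>u\<in>relaxed_set. 0 < weighted_alternative lq lT lF c u"
    using size_constrained_alternative[OF assms] by blast
  define \<Lambda> where "\<Lambda> = (\<Sum>q\<in>vertex_flows. lq q)"
  have \<Lambda>_pos: "\<Lambda> > 0" unfolding \<Lambda>_def using flow_weights_pos[OF inf us lq lTF pos] .
  define q' where "q' = (\<lambda>i x y. \<Sum>q\<in>vertex_flows. lq q / \<Lambda> * q i x y)"
  define r1 where "r1 i = (if i \<in> {1..n} then lT i / \<Lambda> else 0)" for i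
  define r2 where "r2 i = (if i \<in> {1..n} then lF i / \<Lambda> else 0)" for i
  have "c < D q' r1 r2"
  proof -
    let ?u = "argmin_assignment q' r1 r2"
    have "0 < weighted_alternative lq lT lF c ?u / \<Lambda>"
      using pos argmin_assignment_in_relaxed_set \<Lambda>_pos by simp
    also have "\<dots> = L ?u q' r1 r2 - c"
      unfolding q'_def r1_def[abs_def] r2_def[abs_def]
      by (rule Lagr_normalised_weights[OF \<Lambda>_def \<Lambda>_pos, symmetric])
    finally show ?thesis by (simp add: Lagr_argmin_assignment)
  qed
  moreover have q'_range: "q' i x y \<in> flow_range i" for i x y
    unfolding q'_def using finite_vertex_flows lq \<Lambda>_pos
    by (intro convex_sum_real convex_flow_range)
      (auto simp: \<Lambda>_def sum_divide_distrib[symmetric] vertex_flows_in_flow_range)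
  moreover obtain r1' r2' where "\<forall>i. r1' i \<in> multiplier_range (2 * coef_bound) i \<and>
      r2' i \<in> multiplier_range (2 * coef_bound) i" "D q' r1 r2 \<le> D q' r1' r2'"
  proof -
    have "\<bar>q' i x y\<bar> \<le> 1" if "i \<in> {1..n}" for i x y
      using q'_range[of i x y] that by (simp add: abs_le_iff)
    moreover have "0 \<le> r1 i \<and> 0 \<le> r2 i" if "i \<in> {1..n}" for i
      using lTF that \<Lambda>_pos by (simp add: r1_def r2_def)
    ultimately show ?thesis using that multipliers_clipped by blast
  qed
  ultimately show ?thesis
    by (intro bexI[of _ "(q', r1', r2')"]) (auto simp: dual_box_def)
qed

lemma weak_duality:
  assumes "relaxed_sol n w C Sl Su \<gamma> u" and "dual_feas n \<gamma> q r1 r2"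
  shows "D q r1 r2 \<le> En u"
  using dual_obj_le_Lagr[of u q r1 r2] Lagr_le_energy[of u q r1 r2] assms
  unfolding relaxed_sol_def by linarith

lemma strong_duality:
  assumes us: "relaxed_sol n w C Sl Su \<gamma> us"
  shows "\<exists>q r1 r2. dual_feas n \<gamma> q r1 r2 \<and> En us \<le> D q r1 r2"
proof (cases "\<gamma> = \<infinity>")
  case True
  obtain d where "d \<in> dual_box (2 * coef_bound)" "En us \<le> Dd d"
    using dual_value_attained[OF compact_dual_box dual_values_approach_energy_infinite[OF True us]]
    by blast
  moreover have "ereal (2 * coef_bound) \<le> \<gamma>" using True by simp
  ultimately show ?thesis using dual_feas_dual_box by blast
next
  case False
  obtain d where "d \<in> dual_box gamma_fin" "En us \<le> Dd d"
    using dual_value_attained[OF compact_dual_box dual_values_approach_energy_finite[OF False us]]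
    by blast
  then show ?thesis using dual_feas_dual_box[OF gamma_fin_le_gamma] by blast
qed

lemma dual_max_exists: "\<exists>q r1 r2. dual_max n w C Sl Su \<gamma> q r1 r2"
proof -
  obtain us where us: "relaxed_sol n w C Sl Su \<gamma> us" using relaxed_sol_exists by blast
  then obtain q r1 r2 where "dual_feas n \<gamma> q r1 r2" "En us \<le> D q r1 r2"
    using strong_duality by blast
  then have "dual_max n w C Sl Su \<gamma> q r1 r2"
    using weak_duality[OF us] by (auto simp: dual_max_def intro: order_trans)
  then show ?thesis by blast
qed

section \<open>Saddle points and binary minimisers\<close>

lemma pd_pair_if_relaxed_sol_dual_max:
  assumes us: "relaxed_sol n w C Sl Su \<gamma> us" and dm: "dual_max n w C Sl Su \<gamma> q r1 r2"
  shows "pd_pair n w C Sl Su \<gamma> us q r1 r2"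
proof -
  have us_B: "inBrel n us" and us_size: "size_ok n Sl Su \<gamma> us"
    using us by (auto simp: relaxed_sol_def)
  have feas: "dual_feas n \<gamma> q r1 r2" using dm by (simp add: dual_max_def)
  have "En us \<le> D q r1 r2"
    using strong_duality[OF us] dm by (auto simp: dual_max_def intro: order_trans)
  then have at_us: "L us q r1 r2 \<le> D q r1 r2"
    using Lagr_le_energy[OF us_size feas] by linarith
  show ?thesis
    unfolding pd_pair_def
  proof (intro conjI allI impI us_B feas)
    fix u' :: "nat \<Rightarrow> 'v \<Rightarrow> real" assume "inBrel n u'"
    then show "L us q r1 r2 \<le> L u' q r1 r2" using at_us dual_obj_le_Lagr by (meson order_trans)
  next
    fix q' :: "nat \<Rightarrow> 'v \<Rightarrow> 'v \<Rightarrow> real" and r1' r2' assume "dual_feas n \<gamma> q' r1' r2'"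
    then show "L us q' r1' r2' \<le> L us q r1 r2"
      using Lagr_le_energy[OF us_size] \<open>En us \<le> D q r1 r2\<close> dual_obj_le_Lagr[OF us_B]
      by (meson order_trans)
  qed
qed

lemma pd_pair_supported_on_Imin:
  "pd_pair n w C Sl Su \<gamma> u q r1 r2 \<Longrightarrow> (\<Sum>i\<in>Imin n w C q r1 r2 x. u i x) = 1 \<and>
     (\<forall>j\<in>{1..n}. j \<notin> Imin n w C q r1 r2 x \<longrightarrow> u j x = 0)"
  unfolding pd_pair_def by (intro Lagr_minimiser_supported_on_Imin) auto

lemma pd_pair_singleton_Imin:
  assumes "pd_pair n w C Sl Su \<gamma> u q r1 r2" and "Imin n w C q r1 r2 x = {i0}"
  shows "u i0 x = 1 \<and> (\<forall>i\<in>{1..n}. i \<noteq> i0 \<longrightarrow> u i x = 0)"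
  using pd_pair_supported_on_Imin[OF assms(1), of x] assms(2) by auto

lemma pd_pair_binary_if_Imin_singletons:
  assumes pd: "pd_pair n w C Sl Su \<gamma> u q r1 r2" and singletons: "\<forall>x. \<exists>i0. Imin n w C q r1 r2 x = {i0}"
  shows "inBbin n u"
  unfolding inBbin_def
proof (intro allI conjI ballI)
  fix x i assume "i \<in> {1..n}"
  obtain i0 where "Imin n w C q r1 r2 x = {i0}" using singletons by blast
  then show "u i x \<in> {0, 1}"
    using pd_pair_singleton_Imin[OF pd] \<open>i \<in> {1..n}\<close> by (cases "i = i0") auto
next
  fix x show "(\<Sum>i\<in>{1..n}. u i x) = 1" using pd by (simp add: pd_pair_def inBrel_def)
qed

lemma orig_sol_if_relaxed_sol_binary:
  assumes u: "relaxed_sol n w C Sl Su \<gamma> u" and "inBbin n u"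
  shows "orig_sol n w C Sl Su \<gamma> u"
  unfolding orig_sol_def
proof (intro conjI allI impI \<open>inBbin n u\<close>)
  show "size_ok n Sl Su \<gamma> u" using u by (simp add: relaxed_sol_def)
  fix u' :: "nat \<Rightarrow> 'v \<Rightarrow> real" assume "inBbin n u' \<and> size_ok n Sl Su \<gamma> u'"
  then show "En u \<le> En u'" using u inBbin_imp_inBrel unfolding relaxed_sol_def by blast
qed

end

theorem theorem2:
  fixes E :: "('v::finite \<times> 'v) set" and w :: "'v \<Rightarrow> 'v \<Rightarrow> real"
    and n :: nat and C :: "nat \<Rightarrow> 'v \<Rightarrow> real" and Sl Su :: "nat \<Rightarrow> nat" and \<gamma> :: ereal
  assumes E_sym: "\<forall>x y. (x, y) \<in> E \<longleftrightarrow> (y, x) \<in> E"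
    and E_irrefl: "\<forall>x. (x, x) \<notin> E"
    and w_pos: "\<forall>x y. (x, y) \<in> E \<longrightarrow> w x y > 0"
    and w_zero: "\<forall>x y. (x, y) \<notin> E \<longrightarrow> w x y = 0"
    and w_sym: "\<forall>x y. w x y = w y x"
    and n2: "n \<ge> 2"
    and S_le: "\<forall>i\<in>{1..n}. Sl i \<le> Su i"
    and S_sum: "(\<Sum>i\<in>{1..n}. Sl i) \<le> CARD('v)" "CARD('v) \<le> (\<Sum>i\<in>{1..n}. Su i)"
    and gam: "\<gamma> \<ge> 0"
  shows "(\<exists>q \<rho>1 \<rho>2. dual_max n w C Sl Su \<gamma> q \<rho>1 \<rho>2) \<and>
    (\<forall>q \<rho>1 \<rho>2. dual_max n w C Sl Su \<gamma> q \<rho>1 \<rho>2 \<longrightarrow>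
       (\<exists>u. relaxed_sol n w C Sl Su \<gamma> u \<and> pd_pair n w C Sl Su \<gamma> u q \<rho>1 \<rho>2) \<and>
       (\<forall>u. relaxed_sol n w C Sl Su \<gamma> u \<and> pd_pair n w C Sl Su \<gamma> u q \<rho>1 \<rho>2 \<longrightarrow>
          (\<forall>x. (\<Sum>i\<in>Imin n w C q \<rho>1 \<rho>2 x. u i x) = 1 \<and>
               (\<forall>j\<in>{1..n}. j \<notin> Imin n w C q \<rho>1 \<rho>2 x \<longrightarrow> u j x = 0)) \<and>
          (\<forall>x i0. Imin n w C q \<rho>1 \<rho>2 x = {i0} \<longrightarrow>
               u i0 x = 1 \<and> (\<forall>i\<in>{1..n}. i \<noteq> i0 \<longrightarrow> u i x = 0)) \<and>
          ((\<forall>x. \<exists>i0. Imin n w C q \<rho>1 \<rho>2 x = {i0}) \<longrightarrow> orig_sol n w C Sl Su \<gamma> u)))"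
proof -
  interpret labeling_problem n w C Sl Su \<gamma>
  proof
    show "0 \<le> w x y" for x y using w_pos w_zero by (cases "(x, y) \<in> E") (auto intro: less_imp_le)
  qed (use w_sym n2 S_le S_sum gam in auto)
  show ?thesis
    using dual_max_exists relaxed_sol_exists pd_pair_if_relaxed_sol_dual_max
      pd_pair_supported_on_Imin pd_pair_singleton_Imin pd_pair_binary_if_Imin_singletons
      orig_sol_if_relaxed_sol_binary
    by meson
qed

end
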